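(* Let $q$ be a prime power and $P(x)=x^{q^n}+a_{n-1}(t)x^{q^{n-1}}+\cdots+a_1(t)x^q+a_0(t)x$ with all $a_i(t)\in\mathbb{F}_q[t]$, and let $G$ be the Galois group of $P$ over $\mathbb{F}_q(t)$, acting on the $\mathbb{F}_q$-space $V$ of roots of $P$. Suppose that $a_0(\lambda)\ne0$ for some $\lambda\in\mathbb{F}_q$. Then there is an element of $G$ that acts as a cyclic linear transformation of $V$ whose minimal polynomial is \[x^n+a_{n-1}(\lambda)x^{n-1}+\cdots+a_1(\lambda)x+a_0(\lambda).\]
   Context: A linear transformation of $V$ is cyclic if there is a vector $v$ such that $v,\sigma v,\sigma^2v,\dots$ span $V$. *)

theory Defs
  imports "HOL-Algebra.Algebraic_Closure_Type" "HOL-Computational_Algebra.Fraction_Field"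
begin

text \<open>Conventions. For a finite field 'k = F_q, the rational function field F_q(t) is
  the type ('k poly) fract, and all roots are taken in its algebraic closure
  ('k poly fract) alg_closure.\<close>

type_synonym 'k ratfun = "'k poly fract"
type_synonym 'k ac = "'k poly fract alg_closure"

definition emb_K :: "'k::field ratfun \<Rightarrow> 'k ac" where
  "emb_K r = to_ac r"

definition emb_poly :: "'k::field poly \<Rightarrow> 'k ac" where
  "emb_poly p = to_ac (Fract p 1)"

definition emb_const :: "'k::field \<Rightarrow> 'k ac" where
  "emb_const c = emb_poly [:c:]"

definition addP :: "nat \<Rightarrow> (nat \<Rightarrow> 'k::{finite,field} poly) \<Rightarrow> 'k ac \<Rightarrow> 'k ac" where
  "addP n a x = x ^ (card (UNIV :: 'k set) ^ n) + (\<Sum>i<n. emb_poly (a i) * x ^ (card (UNIV :: 'k set) ^ i))"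

definition roots_addP :: "nat \<Rightarrow> (nat \<Rightarrow> 'k::{finite,field} poly) \<Rightarrow> 'k ac set" where
  "roots_addP n a = {x. addP n a x = 0}"

definition is_subfield :: "'a::field set \<Rightarrow> bool" where
  "is_subfield S \<longleftrightarrow> 0 \<in> S \<and> 1 \<in> S \<and> (\<forall>x\<in>S. \<forall>y\<in>S. x + y \<in> S \<and> x * y \<in> S)
     \<and> (\<forall>x\<in>S. - x \<in> S \<and> inverse x \<in> S)"

definition split_field :: "nat \<Rightarrow> (nat \<Rightarrow> 'k::{finite,field} poly) \<Rightarrow> 'k ac set" where
  "split_field n a = \<Inter>{S. is_subfield S \<and> range emb_K \<union> roots_addP n a \<subseteq> S}"

definition galois_group :: "nat \<Rightarrow> (nat \<Rightarrow> 'k::{finite,field} poly) \<Rightarrow> ('k ac \<Rightarrow> 'k ac) set" where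
  "galois_group n a = {\<sigma>. bij_betw \<sigma> (split_field n a) (split_field n a)
      \<and> (\<forall>x\<in>split_field n a. \<forall>y\<in>split_field n a. \<sigma> (x + y) = \<sigma> x + \<sigma> y \<and> \<sigma> (x * y) = \<sigma> x * \<sigma> y)
      \<and> (\<forall>r. \<sigma> (emb_K r) = emb_K r)}"

definition poly_op :: "'k::{finite,field} poly \<Rightarrow> ('k ac \<Rightarrow> 'k ac) \<Rightarrow> 'k ac \<Rightarrow> 'k ac" where
  "poly_op m \<sigma> v = (\<Sum>i\<le>degree m. emb_const (coeff m i) * (\<sigma> ^^ i) v)"

definition cyclic_on :: "'k::{finite,field} itself \<Rightarrow> 'k ac set \<Rightarrow> ('k ac \<Rightarrow> 'k ac) \<Rightarrow> bool" where
  "cyclic_on _ V \<sigma> \<longleftrightarrow> (\<exists>v\<in>V. \<forall>w\<in>V. \<exists>N (c::nat \<Rightarrow> 'k).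
      w = (\<Sum>i<N. emb_const (c i) * (\<sigma> ^^ i) v))"

definition is_min_poly_on :: "'k ac set \<Rightarrow> ('k ac \<Rightarrow> 'k ac) \<Rightarrow> 'k::{finite,field} poly \<Rightarrow> bool" where
  "is_min_poly_on V \<sigma> m \<longleftrightarrow> lead_coeff m = 1 \<and> (\<forall>w\<in>V. poly_op m \<sigma> w = 0)
     \<and> (\<forall>p. p \<noteq> 0 \<and> (\<forall>w\<in>V. poly_op p \<sigma> w = 0) \<longrightarrow> degree m \<le> degree p)"

end

(*
  Expand F_q(t) at the place t = lam as Laurent series in s = t - lam over the algebraic
  closure of F_q. Since a_0(lam) <> 0, the reduction of P at t = lam is a separable q-polynomial,
  so by Hensel's lemma each of its q^n roots lifts to a root of P; thus P splits over the Laurent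
  series, and the splitting field L embeds into them by some tau extending the expansion of F_q(t).
  The coefficientwise Frobenius c |-> c^q of the Laurent series fixes F_q(t) and permutes the
  roots of P, so it is conjugate under tau to an element sigma of the Galois group. Taking constant
  terms maps the roots of P F_q-linearly and bijectively onto the roots of the q-associate of
  m = T^n + a_(n-1)(lam) T^(n-1) + ... + a_0(lam), and turns sigma into x |-> x^q. These roots form
  an F_q[T]-module of order q^n annihilated by m, with T acting as x |-> x^q; lifting cyclic
  vectors along the prime factors of m shows that the module is cyclic, so sigma is cyclic with
  minimal polynomial m.
*)

theory Submission
  imports Defs "HOL-Library.Cardinality" "HOL-Library.FuncSet" "HOL-Number_Theory.Residues"
    "HOL-Computational_Algebra.Polynomial_FPS" "HOL-Computational_Algebra.Formal_Laurent_Series"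
begin

unbundle fps_syntax

section \<open>The Frobenius map in characteristic p\<close>

lemma card_finite_field_ge_2: "CARD('k::{finite,field}) \<ge> 2"
proof -
  have "card {0, 1 :: 'k} \<le> CARD('k)"
    by (rule card_mono) auto
  thus ?thesis by simp
qed

lemma one_less_card_finite_field: "1 < CARD('k::{finite,field})"
  using card_finite_field_ge_2[where 'k='k] by simp

lemma card_power_inject [simp]: "CARD('k::{finite,field}) ^ i = CARD('k) ^ j \<longleftrightarrow> i = j"
  using power_inject_exp[OF one_less_card_finite_field] by blast

lemma card_power_le_iff [simp]: "CARD('k::{finite,field}) ^ i \<le> CARD('k) ^ j \<longleftrightarrow> i \<le> j"
  using power_increasing_iff[OF one_less_card_finite_field] by blast

lemma card_power_pos [simp]: "0 < CARD('k::{finite,field}) ^ i"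
  using one_less_card_finite_field[where 'k='k] by simp

lemma zero_power_card_power [simp]: "(0 :: 'b::semiring_1) ^ (CARD('k::{finite,field}) ^ i) = 0"
  by (simp add: zero_power)

text \<open>Lagrange's theorem in the group of units (the library's version requires sort \<open>finite_field\<close>).\<close>
lemma finite_field_power_card_self: "(x :: 'k::{finite,field}) ^ CARD('k) = x"
proof (cases "x = 0")
  case False
  define R where "R = (ring_of_type_algebra :: 'k ring)"
  interpret field R unfolding R_def by rule
  have units: "Units R = UNIV - {0}"
    by (simp add: field_Units) (simp add: R_def ring_of_type_algebra_def)
  have pow: "x [^]\<^bsub>R\<^esub> k = x ^ k" for k
    by (induction k) (simp_all add: R_def ring_of_type_algebra_def)
  have "x [^]\<^bsub>R\<^esub> card (Units R) = \<one>\<^bsub>R\<^esub>"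
    using units_power_order_eq_one[of x] units False by simp
  hence "x ^ (CARD('k) - 1) = 1"
    using pow units by (simp add: card_Diff_singleton R_def ring_of_type_algebra_def)
  hence "x * x ^ (CARD('k) - 1) = x" by simp
  thus ?thesis by (simp flip: power_Suc add: Suc_diff_1[OF finite_UNIV_card_ge_0])
qed (simp add: finite_UNIV_card_ge_0)

lemma finite_field_power_card_power_self: "(x :: 'k::{finite,field}) ^ (CARD('k) ^ i) = x"
  by (induction i) (simp_all add: finite_field_power_card_self power_mult)

text \<open>The polynomial \<open>(X + 1)\<^sup>q - X\<^sup>q - 1\<close> has degree below \<open>q\<close> but vanishes on all
  \<open>q\<close> elements, so its coefficients, the middle binomial coefficients, vanish.\<close>
lemma of_nat_card_choose_eq_0:
  assumes "0 < k" "k < CARD('k::{finite,field})"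
  shows "of_nat (CARD('k) choose k) = (0 :: 'k)"
proof -
  define q where "q = CARD('k)"
  define f :: "'k poly" where "f = [:1, 1:] ^ q - monom 1 q - 1"
  have q0: "q > 0" unfolding q_def by (rule finite_UNIV_card_ge_0) simp
  have coeff_f: "coeff f j = (if 0 < j \<and> j < q then of_nat (q choose j) else 0)" for j
    using q0 by (cases "j \<le> q")
      (auto simp: f_def coeff_linear_poly_power coeff_monom coeff_eq_0 degree_linear_power)
  have roots: "poly f c = 0" for c
    by (simp add: f_def poly_monom q_def finite_field_power_card_self)
  have "f = 0"
  proof (rule ccontr)
    assume f0: "f \<noteq> 0"
    have "degree f < q"
      using q0 by (intro degree_lessI f0) (auto simp: coeff_f)
    moreover have "q \<le> degree f"
      using card_poly_roots_bound[OF f0] roots by (simp add: q_def)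
    ultimately show False by simp
  qed
  thus ?thesis using coeff_f[of k] assms by (simp add: q_def)
qed

lemma power_card_add:
  fixes x y :: "'b::comm_ring_1"
  assumes "CHAR('b) = CHAR('k::{finite,field})"
  shows "(x + y) ^ CARD('k) = x ^ CARD('k) + y ^ CARD('k)"
proof -
  have middle: "of_nat (CARD('k) choose k) = (0 :: 'b)" if "0 < k" "k < CARD('k)" for k
    using of_nat_card_choose_eq_0[OF that] assms by (simp add: of_nat_eq_0_iff_char_dvd)
  have "(x + y) ^ CARD('k) = (\<Sum>k\<le>CARD('k). of_nat (CARD('k) choose k) * x ^ k * y ^ (CARD('k) - k))"
    by (rule binomial_ring)
  also have "\<dots> = (\<Sum>k\<in>{0, CARD('k)}. of_nat (CARD('k) choose k) * x ^ k * y ^ (CARD('k) - k))"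
    by (rule sum.mono_neutral_right) (auto simp: middle)
  finally show ?thesis using card_finite_field_ge_2[where 'k='k] by (simp add: add.commute)
qed

lemma power_card_power_add:
  fixes x y :: "'b::comm_ring_1"
  assumes "CHAR('b) = CHAR('k::{finite,field})"
  shows "(x + y) ^ (CARD('k) ^ i) = x ^ (CARD('k) ^ i) + y ^ (CARD('k) ^ i)"
proof (induction i)
  case (Suc i)
  have "(x + y) ^ (CARD('k) ^ Suc i) = ((x + y) ^ (CARD('k) ^ i)) ^ CARD('k)"
    by (simp only: power_Suc2 power_mult)
  also have "\<dots> = x ^ (CARD('k) ^ Suc i) + y ^ (CARD('k) ^ Suc i)"
    by (simp only: Suc power_card_add[OF assms] power_Suc2 power_mult)
  finally show ?case .
qed simp

lemma power_card_power_sum: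
  fixes f :: "'a \<Rightarrow> 'b::comm_ring_1"
  assumes "CHAR('b) = CHAR('k::{finite,field})"
  shows "sum f A ^ (CARD('k) ^ i) = (\<Sum>x\<in>A. f x ^ (CARD('k) ^ i))"
  by (induction A rule: infinite_finite_induct)
     (simp_all add: power_card_power_add[OF assms] zero_power)

lemma power_card_sum:
  fixes f :: "'a \<Rightarrow> 'b::comm_ring_1"
  assumes "CHAR('b) = CHAR('k::{finite,field})"
  shows "sum f A ^ CARD('k) = (\<Sum>x\<in>A. f x ^ CARD('k))"
  using power_card_power_sum[OF assms, of f A 1] by simp

lemma of_nat_card_power_eq_0:
  assumes "CHAR('b::comm_ring_1) = CHAR('k::{finite,field})" "i > 0"
  shows "of_nat (CARD('k) ^ i) = (0 :: 'b)"
proof -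
  have "CHAR('k) dvd CARD('k) ^ i"
    using assms(2) by (intro dvd_trans[OF CHAR_dvd_CARD]) simp
  thus ?thesis by (simp only: of_nat_eq_0_iff_char_dvd assms(1))
qed

lemma CHAR_fract [simp]: "CHAR('a::idom fract) = CHAR('a)"
proof (rule CHAR_eqI)
  show "of_nat CHAR('a) = (0 :: 'a fract)"
    by (simp add: of_nat_fract Zero_fract_def eq_fract)
next
  fix x assume "of_nat x = (0 :: 'a fract)"
  hence "(of_nat x :: 'a) = 0" by (simp add: of_nat_fract Zero_fract_def eq_fract)
  thus "CHAR('a) dvd x" by (simp add: of_nat_eq_0_iff_char_dvd)
qed

section \<open>q-polynomials\<close>

text \<open>The type argument only supplies \<open>q = CARD('k)\<close>; the coefficients live in another ring.\<close>
definition qpoly :: "'k::{finite,field} itself \<Rightarrow> nat \<Rightarrow> (nat \<Rightarrow> 'b::comm_ring_1) \<Rightarrow> 'b poly" where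
  "qpoly _ n c = (\<Sum>i\<le>n. monom (c i) (CARD('k) ^ i))"

lemma poly_qpoly: "poly (qpoly TYPE('k::{finite,field}) n c) x = (\<Sum>i\<le>n. c i * x ^ (CARD('k) ^ i))"
  by (simp add: qpoly_def poly_sum poly_monom)

lemma poly_qpoly_monic:
  "poly (qpoly TYPE('k::{finite,field}) n (c(n := 1))) x = x ^ (CARD('k) ^ n) + (\<Sum>i<n. c i * x ^ (CARD('k) ^ i))"
  by (simp add: poly_qpoly lessThan_Suc_atMost[symmetric] add.commute)

lemma qpoly_cong:
  "(\<And>i. i \<le> n \<Longrightarrow> c i = d i) \<Longrightarrow> qpoly TYPE('k::{finite,field}) n c = qpoly TYPE('k) n d"
  unfolding qpoly_def by (intro sum.cong) auto

lemma coeff_qpoly: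
  "coeff (qpoly TYPE('k::{finite,field}) n c) k = (\<Sum>i\<le>n. if k = CARD('k) ^ i then c i else 0)"
  unfolding qpoly_def coeff_sum by (intro sum.cong) (auto simp: coeff_monom)

lemma coeff_qpoly_power:
  "i \<le> n \<Longrightarrow> coeff (qpoly TYPE('k::{finite,field}) n c) (CARD('k) ^ i) = c i"
  by (simp add: coeff_qpoly)

lemma coeff_qpoly_eq_0:
  "(\<And>i. i \<le> n \<Longrightarrow> k \<noteq> CARD('k::{finite,field}) ^ i) \<Longrightarrow> coeff (qpoly TYPE('k) n c) k = 0"
  by (simp add: coeff_qpoly)

lemma degree_qpoly_le: "degree (qpoly TYPE('k::{finite,field}) n c) \<le> CARD('k) ^ n"
  by (intro degree_le allI impI coeff_qpoly_eq_0) (metis card_power_le_iff not_le)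

lemma degree_qpoly: "c n \<noteq> 0 \<Longrightarrow> degree (qpoly TYPE('k::{finite,field}) n c) = CARD('k) ^ n"
  by (intro antisym degree_qpoly_le le_degree) (simp add: coeff_qpoly_power)

lemma qpoly_nonzero: "c n \<noteq> 0 \<Longrightarrow> qpoly TYPE('k::{finite,field}) n c \<noteq> 0"
  by (metis coeff_0 coeff_qpoly_power order_refl)

lemma map_poly_qpoly:
  assumes "f 0 = 0"
  shows "map_poly f (qpoly TYPE('k::{finite,field}) n c) = qpoly TYPE('k) n (\<lambda>i. f (c i))"
proof (rule poly_eqI)
  fix k
  show "coeff (map_poly f (qpoly TYPE('k) n c)) k = coeff (qpoly TYPE('k) n (\<lambda>i. f (c i))) k"
  proof (cases "\<exists>i\<le>n. k = CARD('k) ^ i")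
    case True
    then obtain i where "i \<le> n" "k = CARD('k) ^ i" by blast
    thus ?thesis by (simp add: coeff_map_poly coeff_qpoly_power assms)
  next
    case False
    thus ?thesis by (simp add: coeff_map_poly coeff_qpoly_eq_0 assms)
  qed
qed

lemma poly_qpoly_add:
  assumes "CHAR('b::comm_ring_1) = CHAR('k::{finite,field})"
  shows "poly (qpoly TYPE('k) n c) (x + y :: 'b) = poly (qpoly TYPE('k) n c) x + poly (qpoly TYPE('k) n c) y"
  by (simp add: poly_qpoly power_card_power_add[OF assms] distrib_left sum.distrib)

lemma poly_qpoly_diff:
  assumes "CHAR('b::comm_ring_1) = CHAR('k::{finite,field})"
  shows "poly (qpoly TYPE('k) n c) (x - y :: 'b) = poly (qpoly TYPE('k) n c) x - poly (qpoly TYPE('k) n c) y"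
  using poly_qpoly_add[OF assms, of n c "x - y" y] by (simp add: eq_diff_eq)

lemma pderiv_qpoly:
  assumes "CHAR('b::idom) = CHAR('k::{finite,field})"
  shows "pderiv (qpoly TYPE('k) n (c :: nat \<Rightarrow> 'b)) = [:c 0:]"
proof -
  have "pderiv (monom (c i) (CARD('k) ^ i)) = (if i = 0 then [:c 0:] else 0)" for i
    using of_nat_card_power_eq_0[OF assms, of i] by (auto simp: pderiv_monom monom_0)
  thus ?thesis by (simp add: qpoly_def higher_pderiv_sum[where n = 1, simplified])
qed

lemma card_roots_separable:
  fixes p :: "'a::alg_closed_field poly"
  assumes "p \<noteq> 0" and "\<And>x. poly p x = 0 \<Longrightarrow> poly (pderiv p) x \<noteq> 0"
  shows "card {x. poly p x = 0} = degree p"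
  using assms
proof (induction "degree p" arbitrary: p)
  case 0
  then obtain c where "p = [:c:]" "c \<noteq> 0" by (metis degree_0_id pCons_eq_0_iff)
  thus ?case by simp
next
  case (Suc d)
  obtain x where x: "poly p x = 0"
    using alg_closed_imp_poly_has_root[of p] Suc.hyps(2) by auto
  then obtain r where pr: "p = [:-x, 1:] * r" by (metis poly_eq_0_iff_dvd dvdE)
  have r0: "r \<noteq> 0" using Suc.prems(1) pr by auto
  have dr: "degree r = d" using Suc.hyps(2) degree_mult_eq[of "[:-x, 1:]" r] r0 pr by simp
  have "pderiv [:-x, 1:] = 1" by (simp add: pderiv_pCons)
  hence dp: "pderiv p = r + [:-x, 1:] * pderiv r"
    by (simp only: pr pderiv_mult mult_1_right add.commute)
  have rx: "poly r x \<noteq> 0" using Suc.prems(2)[OF x] dp by auto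
  have "poly (pderiv r) y \<noteq> 0" if "poly r y = 0" for y
  proof
    assume "poly (pderiv r) y = 0"
    hence "poly (pderiv p) y = 0" using that dp by simp
    moreover have "poly p y = 0" using that pr by simp
    ultimately show False using Suc.prems(2) by blast
  qed
  hence "card {y. poly r y = 0} = d" using Suc.hyps(1) dr r0 by blast
  moreover have "{y. poly p y = 0} = insert x {y. poly r y = 0}" using pr by auto
  ultimately show ?case using rx poly_roots_finite[OF r0] Suc.hyps(2) by simp
qed

lemma card_roots_eq_degree_dvd_has_root:
  fixes p :: "'a::field poly"
  assumes p: "p \<noteq> 0" "card {x. poly p x = 0} = degree p" and D: "D dvd p" "degree D > 0"
  shows "\<exists>b. poly D b = 0"
proof (rule ccontr)
  assume no_root: "\<not> (\<exists>b. poly D b = 0)"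
  obtain E where E: "p = D * E" using D(1) by (elim dvdE)
  have "D \<noteq> 0" "E \<noteq> 0" using p(1) E by auto
  have "{x. poly p x = 0} \<subseteq> {x. poly E x = 0}" using no_root E by auto
  hence "card {x. poly p x = 0} \<le> card {x. poly E x = 0}"
    by (rule card_mono[OF poly_roots_finite[OF \<open>E \<noteq> 0\<close>]])
  also have "\<dots> \<le> degree E" by (rule card_poly_roots_bound[OF \<open>E \<noteq> 0\<close>])
  finally have "card {x. poly p x = 0} \<le> degree E" .
  thus False using p(2) D(2) E \<open>D \<noteq> 0\<close> \<open>E \<noteq> 0\<close> by (simp add: degree_mult_eq)
qed

lemma card_roots_qpoly:
  fixes c :: "nat \<Rightarrow> 'b::alg_closed_field"
  assumes "CHAR('b) = CHAR('k::{finite,field})" "c 0 \<noteq> 0" "c n \<noteq> 0"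
  shows "card {x. poly (qpoly TYPE('k) n c) x = 0} = CARD('k) ^ n"
proof -
  have "card {x. poly (qpoly TYPE('k) n c) x = 0} = degree (qpoly TYPE('k) n c)"
    by (intro card_roots_separable qpoly_nonzero assms(3)) (simp add: pderiv_qpoly[OF assms(1)] assms(2))
  thus ?thesis by (simp add: degree_qpoly assms(3))
qed

lemma emb_K_simps [simp]:
  "emb_K 0 = 0" "emb_K 1 = 1" "emb_K (r + s) = emb_K r + emb_K s" "emb_K (r * s) = emb_K r * emb_K s"
  by (simp_all add: emb_K_def)

lemma emb_poly_eq_emb_K: "emb_poly p = emb_K (Fract p 1)"
  by (simp add: emb_poly_def emb_K_def)

lemma emb_const_eq_emb_K: "emb_const c = emb_K (Fract [:c:] 1)"
  by (simp add: emb_const_def emb_poly_eq_emb_K)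

lemma emb_poly_eq_iff [simp]: "emb_poly p = emb_poly p' \<longleftrightarrow> p = p'"
  by (simp add: emb_poly_def eq_fract)

lemma emb_poly_eq_0_iff [simp]: "emb_poly p = 0 \<longleftrightarrow> p = 0"
  using emb_poly_eq_iff[of p 0] by (simp add: emb_poly_def Zero_fract_def)

lemma emb_const_simps [simp]:
  "emb_const 0 = 0" "emb_const 1 = 1"
  "emb_const (c + d) = emb_const c + emb_const d" "emb_const (c * d) = emb_const c * emb_const d"
  "emb_const c = emb_const d \<longleftrightarrow> c = d"
  by (simp_all add: emb_const_def emb_poly_def eq_fract flip: to_ac_add to_ac_mult)
     (simp_all add: one_pCons eq_fract Zero_fract_def One_fract_def)

lemma emb_const_diff [simp]: "emb_const (c - d) = emb_const c - emb_const d"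
  using emb_const_simps(3)[of "c - d" d] by (simp add: eq_diff_eq)

lemma emb_const_eq_0_iff [simp]: "emb_const c = 0 \<longleftrightarrow> c = 0"
  using emb_const_simps(5)[of c 0] by simp

lemma emb_const_power: "emb_const (c ^ k) = emb_const c ^ k"
  by (induction k) simp_all

lemma emb_const_power_card_power [simp]:
  "emb_const (c :: 'k::{finite,field}) ^ (CARD('k) ^ i) = emb_const c"
  by (simp add: finite_field_power_card_power_self flip: emb_const_power)

section \<open>q-associates and cyclic vectors of the Frobenius\<close>

text \<open>Products of polynomials become compositions of q-associates (\<open>q_assoc_mult\<close>), so the roots
  of a q-associate form an \<open>F\<^sub>q[T]\<close>-module on which \<open>T\<close> acts as \<open>x \<mapsto> x\<^sup>q\<close>.\<close>
definition q_assoc :: "'k::{finite,field} poly \<Rightarrow> 'k ac \<Rightarrow> 'k ac" where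
  "q_assoc g = poly (qpoly TYPE('k) (degree g) (\<lambda>i. emb_const (coeff g i)))"

lemma q_assoc_eq_sum:
  fixes g :: "'k::{finite,field} poly"
  assumes "degree g \<le> N"
  shows "q_assoc g x = (\<Sum>i\<le>N. emb_const (coeff g i) * x ^ (CARD('k) ^ i))"
proof -
  have "(\<Sum>i\<le>N. emb_const (coeff g i) * x ^ (CARD('k) ^ i)) =
        (\<Sum>i\<le>degree g. emb_const (coeff g i) * x ^ (CARD('k) ^ i))"
    using assms by (intro sum.mono_neutral_right) (auto simp: coeff_eq_0)
  thus ?thesis by (simp add: q_assoc_def poly_qpoly)
qed

lemma q_assoc_zero [simp]: "q_assoc 0 x = 0"
  by (simp add: q_assoc_def poly_qpoly)

lemma q_assoc_one [simp]: "q_assoc 1 x = x"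
  by (simp add: q_assoc_def poly_qpoly)

lemma q_assoc_at_0 [simp]: "q_assoc g 0 = 0"
  by (simp add: q_assoc_def poly_qpoly)

lemma q_assoc_add: "q_assoc g (x + y) = q_assoc g x + q_assoc g y"
  unfolding q_assoc_def by (rule poly_qpoly_add) simp

lemma q_assoc_sum: "q_assoc g (sum f A) = (\<Sum>a\<in>A. q_assoc g (f a))"
  by (induction A rule: infinite_finite_induct) (simp_all add: q_assoc_add)

lemma q_assoc_scale: "q_assoc g (emb_const c * x) = emb_const c * q_assoc g x"
  by (simp add: q_assoc_def poly_qpoly power_mult_distrib sum_distrib_left mult_ac)

lemma q_assoc_plus: "q_assoc (g + h) x = q_assoc g x + q_assoc h x"
proof -
  define N where "N = max (degree g) (degree h)"
  have "degree (g + h) \<le> N" "degree g \<le> N" "degree h \<le> N"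
    unfolding N_def using degree_add_le_max[of g h] by auto
  thus ?thesis by (simp add: q_assoc_eq_sum sum.distrib distrib_right)
qed

lemma q_assoc_minus: "q_assoc (g - h) x = q_assoc g x - q_assoc h x"
  using q_assoc_plus[of "g - h" h x] by simp

lemma q_assoc_sum_poly: "q_assoc (sum f A) x = (\<Sum>a\<in>A. q_assoc (f a) x)"
  by (induction A rule: infinite_finite_induct) (simp_all add: q_assoc_plus)

lemma q_assoc_smult: "q_assoc (smult c g) x = emb_const c * q_assoc g x"
  by (simp add: q_assoc_eq_sum[of "smult c g" "degree g"] q_assoc_eq_sum[of g "degree g"]
      sum_distrib_left mult_ac)

lemma q_assoc_monom: "q_assoc (monom (c :: 'k::{finite,field}) i) x = emb_const c * x ^ (CARD('k) ^ i)"
proof -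
  have "q_assoc (monom c i) x = (\<Sum>j\<le>i. emb_const (coeff (monom c i) j) * x ^ (CARD('k) ^ j))"
    by (rule q_assoc_eq_sum) (rule degree_monom_le)
  also have "\<dots> = (\<Sum>j\<le>i. if j = i then emb_const c * x ^ (CARD('k) ^ i) else 0)"
    by (intro sum.cong) (auto simp: coeff_monom)
  finally show ?thesis by simp
qed

lemma q_assoc_pCons: "q_assoc (pCons (c :: 'k::{finite,field}) g) x = emb_const c * x + q_assoc g x ^ CARD('k)"
proof -
  define N where "N = degree g"
  have "q_assoc (pCons c g) x = (\<Sum>i\<le>Suc N. emb_const (coeff (pCons c g) i) * x ^ (CARD('k) ^ i))"
    by (rule q_assoc_eq_sum) (simp add: N_def degree_pCons_le)
  also have "\<dots> = emb_const c * x + (\<Sum>i\<le>N. emb_const (coeff g i) * x ^ (CARD('k) ^ Suc i))"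
    by (simp only: sum.atMost_Suc_shift coeff_pCons_0 coeff_pCons_Suc power_0 power_one_right)
  also have "(\<Sum>i\<le>N. emb_const (coeff g i) * x ^ (CARD('k) ^ Suc i)) =
             (\<Sum>i\<le>N. (emb_const (coeff g i) * x ^ (CARD('k) ^ i)) ^ CARD('k))"
    by (simp add: power_mult_distrib emb_const_power_card_power[where i = 1, simplified]
        flip: power_mult) (simp add: mult.commute)
  also have "(\<Sum>i\<le>N. (emb_const (coeff g i) * x ^ (CARD('k) ^ i)) ^ CARD('k)) = q_assoc g x ^ CARD('k)"
    by (simp add: q_assoc_eq_sum[of g N] N_def power_card_sum[where 'k='k and 'b="'k ac"])
  finally show ?thesis .
qed

lemma q_assoc_mult: "q_assoc (g * h) x = q_assoc g (q_assoc h x)"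
proof (induction g)
  case (pCons c g)
  have "q_assoc (pCons c g * h) x = q_assoc (smult c h) x + q_assoc (pCons 0 (g * h)) x"
    by (simp add: q_assoc_plus)
  also have "\<dots> = q_assoc (pCons c g) (q_assoc h x)"
    by (simp add: q_assoc_smult q_assoc_pCons pCons.IH)
  finally show ?case .
qed simp

lemma q_assoc_commute: "q_assoc g (q_assoc h x) = q_assoc h (q_assoc g x)"
  by (metis q_assoc_mult mult.commute)

lemma q_assoc_surj:
  fixes g :: "'k::{finite,field} poly"
  assumes "degree g > 0"
  shows "\<exists>x. q_assoc g x = v"
proof -
  define R where "R = qpoly TYPE('k) (degree g) (\<lambda>i. emb_const (coeff g i)) - [:v:]"
  have "coeff R (CARD('k) ^ degree g) = emb_const (lead_coeff g)"
    unfolding R_def by (simp add: coeff_qpoly_power coeff_pCons split: nat.split)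
  hence "CARD('k) ^ degree g \<le> degree R"
    using assms by (intro le_degree) auto
  moreover have "0 < CARD('k) ^ degree g" by simp
  ultimately have "degree R > 0" by linarith
  then obtain x where "poly R x = 0" using alg_closed_imp_poly_has_root by blast
  thus ?thesis unfolding R_def q_assoc_def by auto
qed

lemma q_assoc_roots_finite:
  "g \<noteq> 0 \<Longrightarrow> finite {x. q_assoc g x = 0}"
  unfolding q_assoc_def by (intro poly_roots_finite qpoly_nonzero) simp

lemma card_q_assoc_roots_le:
  "(g :: 'k::{finite,field} poly) \<noteq> 0 \<Longrightarrow> card {x. q_assoc g x = 0} \<le> CARD('k) ^ degree g"
proof -
  assume "g \<noteq> 0"
  hence "qpoly TYPE('k) (degree g) (\<lambda>i. emb_const (coeff g i)) \<noteq> 0"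
    by (intro qpoly_nonzero) simp
  thus ?thesis unfolding q_assoc_def
    using card_poly_roots_bound \<open>g \<noteq> 0\<close> by (fastforce simp: degree_qpoly)
qed

text \<open>The derivative of the q-associate is the constant \<open>g(0)\<close>, so it is separable.\<close>
lemma card_q_assoc_roots:
  fixes g :: "'k::{finite,field} poly"
  assumes "coeff g 0 \<noteq> 0"
  shows "card {x. q_assoc g x = 0} = CARD('k) ^ degree g"
  unfolding q_assoc_def using assms
  by (intro card_roots_qpoly) (auto simp: leading_coeff_0_iff)

lemma irreducible_degree_pos:
  assumes "irreducible (p :: 'a::field poly)"
  shows "degree p > 0"
proof -
  have "p \<noteq> 0" "\<not> is_unit p" using assms irreducible_not_unit by auto
  thus ?thesis by (simp add: is_unit_iff_degree)
qed

lemma irreducible_dvd_exists: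
  fixes m :: "'a::field poly"
  assumes "degree m > 0"
  shows "\<exists>p. irreducible p \<and> p dvd m"
  using assms
proof (induction "degree m" arbitrary: m rule: less_induct)
  case less
  have m0: "m \<noteq> 0" using less.prems by auto
  hence "\<not> is_unit m" using less.prems by (simp add: is_unit_iff_degree)
  show ?case
  proof (cases "irreducible m")
    case False
    then obtain b where b: "b dvd m" "\<not> m dvd b" "\<not> is_unit b"
      using m0 \<open>\<not> is_unit m\<close> by (auto simp: irreducible_altdef)
    then obtain c where m: "m = b * c" by (elim dvdE)
    have "b \<noteq> 0" "c \<noteq> 0" using m0 m by auto
    have "\<not> is_unit c" using b(2) m by (auto simp: mult_unit_dvd_iff')
    hence "degree c > 0" using \<open>c \<noteq> 0\<close> by (simp add: is_unit_iff_degree)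
    hence "degree b < degree m" using m \<open>b \<noteq> 0\<close> \<open>c \<noteq> 0\<close> by (simp add: degree_mult_eq)
    moreover have "degree b > 0" using b(3) \<open>b \<noteq> 0\<close> by (simp add: is_unit_iff_degree)
    ultimately obtain p where "irreducible p" "p dvd b" using less.hyps by blast
    thus ?thesis using b(1) dvd_trans by blast
  qed auto
qed

definition generates_annihilator :: "'k::{finite,field} poly \<Rightarrow> 'k ac \<Rightarrow> bool" where
  "generates_annihilator h v \<longleftrightarrow> q_assoc h v = 0 \<and> (\<forall>d. q_assoc d v = 0 \<longrightarrow> h dvd d)"

text \<open>The annihilator \<open>{d. q_assoc d v = 0}\<close> is an ideal; a nonzero element of least degree generates it.\<close>
lemma generates_annihilator_exists:
  assumes "g \<noteq> 0" "q_assoc g v = 0"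
  shows "\<exists>h. generates_annihilator h v"
proof -
  obtain h where h: "h \<noteq> 0" "q_assoc h v = 0"
    and least: "\<And>d. d \<noteq> 0 \<Longrightarrow> q_assoc d v = 0 \<Longrightarrow> degree h \<le> degree d"
    using ex_has_least_nat[of "\<lambda>d. d \<noteq> 0 \<and> q_assoc d v = 0" g degree] assms by blast
  have "h dvd d" if "q_assoc d v = 0" for d
  proof (rule ccontr)
    assume "\<not> h dvd d"
    hence r0: "d mod h \<noteq> 0" by (simp add: mod_eq_0_iff_dvd)
    have "q_assoc (d mod h) v = 0"
      using that h(2) by (simp add: minus_div_mult_eq_mod[symmetric] q_assoc_minus q_assoc_mult)
    hence "degree h \<le> degree (d mod h)" using least r0 by blast
    thus False using degree_mod_less'[OF h(1) r0] by simp
  qed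
  thus ?thesis using h(2) by (auto simp: generates_annihilator_def)
qed

lemma irreducible_dvd_of_common_root:
  assumes "irreducible p" "q_assoc p z = 0" "q_assoc k z = 0" "z \<noteq> 0"
  shows "p dvd k"
proof -
  have "p \<noteq> 0" using assms(1) by auto
  then obtain h where h: "generates_annihilator h z"
    using generates_annihilator_exists assms(2) by blast
  hence "h dvd p" "h dvd k" using assms(2,3) by (auto simp: generates_annihilator_def)
  moreover have "\<not> is_unit h"
  proof
    assume "is_unit h"
    then obtain h' where "1 = h * h'" by (elim dvdE)
    hence "z = q_assoc h' (q_assoc h z)" by (metis q_assoc_mult q_assoc_one mult.commute)
    thus False using h assms(4) by (simp add: generates_annihilator_def)
  qed
  ultimately show ?thesis using irreducibleD'[OF assms(1)] dvd_trans by blast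
qed

lemma generates_annihilator_lift:
  assumes p: "irreducible p" and u: "q_assoc p u = v"
    and h: "generates_annihilator h v" and hu: "q_assoc h u \<noteq> 0"
  shows "generates_annihilator (p * h) u"
  unfolding generates_annihilator_def
proof (intro conjI allI impI)
  have hv: "q_assoc h v = 0" using h by (simp add: generates_annihilator_def)
  thus "q_assoc (p * h) u = 0" using u by (simp add: q_assoc_mult q_assoc_commute[of p])
  fix d assume du: "q_assoc d u = 0"
  have "q_assoc d v = 0" using du u by (metis q_assoc_commute q_assoc_at_0)
  then obtain k where d: "d = h * k" using h by (auto simp: generates_annihilator_def elim: dvdE)
  have "q_assoc p (q_assoc h u) = 0" using hv u by (simp add: q_assoc_commute[of p])
  moreover have "q_assoc k (q_assoc h u) = 0" using du d by (simp add: q_assoc_mult q_assoc_commute[of k])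
  ultimately have "p dvd k" using irreducible_dvd_of_common_root[OF p] hu by blast
  thus "p * h dvd d" using d by (simp add: mult.commute mult_dvd_mono)
qed

lemma q_assoc_nonzero_root:
  fixes p :: "'k::{finite,field} poly"
  assumes "degree p > 0" "coeff p 0 \<noteq> 0"
  shows "\<exists>z. z \<noteq> 0 \<and> q_assoc p z = 0"
proof -
  have "CARD('k) \<le> CARD('k) ^ degree p"
    using card_power_le_iff[where 'k='k, of 1 "degree p"] assms(1) by simp
  hence "card {z. q_assoc p z = 0} \<ge> 2"
    using card_finite_field_ge_2[where 'k='k] by (simp add: card_q_assoc_roots assms(2))
  hence "\<not> {z. q_assoc p z = 0} \<subseteq> {0}"
    using card_mono[of "{0}" "{z. q_assoc p z = 0}"] by auto
  thus ?thesis by blast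
qed

text \<open>If neither \<open>u\<close> nor \<open>u + z\<close> is a generator, \<open>z\<close> is a common root of the q-associates of \<open>p\<close>
  and \<open>h\<close>; then \<open>p\<close> divides \<open>h\<close>, and \<open>h / p\<close> already annihilates \<open>v\<close>.\<close>
lemma generates_annihilator_lift_or_shift:
  assumes p: "irreducible p" and u: "q_assoc p u = v" and v: "generates_annihilator h v"
    and z: "q_assoc p z = 0" "z \<noteq> 0" and h0: "h \<noteq> 0"
  shows "generates_annihilator (p * h) u \<or> generates_annihilator (p * h) (u + z)"
proof (rule ccontr)
  assume "\<not> ?thesis"
  moreover have "q_assoc p (u + z) = v" using u z by (simp add: q_assoc_add)
  ultimately have "q_assoc h u = 0" "q_assoc h (u + z) = 0"
    using generates_annihilator_lift[OF p _ v] u by blast+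
  hence "q_assoc h z = 0" by (auto simp: q_assoc_add)
  hence "p dvd h" using irreducible_dvd_of_common_root[OF p z(1)] z(2) by blast
  then obtain h' where h': "h = p * h'" by (elim dvdE)
  have "q_assoc h' v = 0" using \<open>q_assoc h u = 0\<close> u h' by (simp add: q_assoc_mult mult.commute)
  hence "h dvd h'" using v by (simp add: generates_annihilator_def)
  moreover have "h' \<noteq> 0" "p \<noteq> 0" using h0 h' by auto
  ultimately have "degree h \<le> degree h'" by (simp add: dvd_imp_degree_le)
  moreover have "degree p > 0" using p by (rule irreducible_degree_pos)
  ultimately show False using h' \<open>h' \<noteq> 0\<close> \<open>p \<noteq> 0\<close> by (simp add: degree_mult_eq)
qed

theorem cyclic_vector_exists:
  fixes m :: "'k::{finite,field} poly"
  assumes "coeff m 0 \<noteq> 0"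
  shows "\<exists>v. generates_annihilator m v"
  using assms
proof (induction "degree m" arbitrary: m rule: less_induct)
  case less
  show ?case
  proof (cases "degree m = 0")
    case True
    moreover have "m \<noteq> 0" using less.prems by auto
    ultimately have "is_unit m" by (simp add: is_unit_iff_degree)
    hence "generates_annihilator m 0" by (simp add: generates_annihilator_def unit_imp_dvd)
    thus ?thesis by blast
  next
    case False
    then obtain p where p: "irreducible p" "p dvd m" using irreducible_dvd_exists by blast
    then obtain h where m: "m = p * h" by (elim dvdE)
    have "coeff p 0 \<noteq> 0" "coeff h 0 \<noteq> 0" using less.prems m by (auto simp: coeff_mult_0)
    have "p \<noteq> 0" "h \<noteq> 0" using less.prems m by auto
    have dp: "degree p > 0" using p(1) by (rule irreducible_degree_pos)
    hence "degree h < degree m" using m \<open>p \<noteq> 0\<close> \<open>h \<noteq> 0\<close> by (simp add: degree_mult_eq)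
    then obtain v where v: "generates_annihilator h v" using less.hyps \<open>coeff h 0 \<noteq> 0\<close> by blast
    obtain u where u: "q_assoc p u = v" using q_assoc_surj[OF dp] by blast
    obtain z where "z \<noteq> 0" "q_assoc p z = 0" using q_assoc_nonzero_root[OF dp \<open>coeff p 0 \<noteq> 0\<close>] by blast
    thus ?thesis using generates_annihilator_lift_or_shift[OF p(1) u v _ _ \<open>h \<noteq> 0\<close>] m by blast
  qed
qed

lemma coeff_sum_monom: "coeff (\<Sum>i<n. monom (c i) i) j = (if j < n then c j else 0)"
  by (simp add: coeff_sum coeff_monom)

lemma inj_on_q_assoc_span:
  fixes m :: "'k::{finite,field} poly"
  assumes v: "generates_annihilator m v"
  shows "inj_on (\<lambda>c. \<Sum>i<degree m. emb_const (c i) * v ^ (CARD('k) ^ i)) ({..<degree m} \<rightarrow>\<^sub>E UNIV)"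
    (is "inj_on ?span ?D")
proof (rule inj_onI)
  fix c c' assume c: "c \<in> ?D" "c' \<in> ?D" and eq: "?span c = ?span c'"
  define g where "g = (\<Sum>i<degree m. monom (c i - c' i) i)"
  have "q_assoc g v = (\<Sum>i<degree m. emb_const (c i - c' i) * v ^ (CARD('k) ^ i))"
    by (simp add: g_def q_assoc_sum_poly q_assoc_monom)
  also have "\<dots> = ?span c - ?span c'"
    by (simp add: left_diff_distrib sum_subtractf)
  finally have "q_assoc g v = 0" using eq by simp
  hence "m dvd g" using v by (simp add: generates_annihilator_def)
  have "g = 0"
  proof (rule ccontr)
    assume "g \<noteq> 0"
    hence "degree g < degree m" by (intro degree_lessI) (auto simp: g_def coeff_sum_monom)
    thus False using dvd_imp_degree_le[OF \<open>m dvd g\<close> \<open>g \<noteq> 0\<close>] by simp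
  qed
  show "c = c'"
  proof
    fix j show "c j = c' j"
    proof (cases "j < degree m")
      case True
      hence "coeff g j = c j - c' j" by (simp add: g_def coeff_sum_monom)
      thus ?thesis using \<open>g = 0\<close> by simp
    next
      case False
      hence "j \<notin> {..<degree m}" by simp
      thus ?thesis using PiE_arb[OF c(1)] PiE_arb[OF c(2)] by simp
    qed
  qed
qed

theorem roots_q_assoc_span:
  fixes m :: "'k::{finite,field} poly"
  assumes v: "generates_annihilator m v" and m0: "m \<noteq> 0"
  shows "{x. q_assoc m x = 0} =
    (\<lambda>c. \<Sum>i<degree m. emb_const (c i) * v ^ (CARD('k) ^ i)) ` ({..<degree m} \<rightarrow>\<^sub>E UNIV)"
    (is "?W = ?span ` ?D")
proof -
  have card_span: "card (?span ` ?D) = CARD('k) ^ degree m"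
    using inj_on_q_assoc_span[OF v] by (simp add: card_image card_PiE)
  have "q_assoc m (v ^ (CARD('k) ^ i)) = 0" for i
    using v q_assoc_commute[of m "monom 1 i" v] by (simp add: q_assoc_monom generates_annihilator_def)
  hence "?span ` ?D \<subseteq> ?W" by (auto simp: q_assoc_sum q_assoc_scale)
  moreover have "card ?W \<le> card (?span ` ?D)"
    using card_q_assoc_roots_le[OF m0] card_span by simp
  ultimately show ?thesis
    using card_seteq[OF q_assoc_roots_finite[OF m0]] by blast
qed

section \<open>Hensel lifting over formal power series\<close>

lemma fps_X_power_dvd_iff: "fps_X ^ k dvd (f :: 'a::comm_ring_1 fps) \<longleftrightarrow> (\<forall>i<k. f $ i = 0)"
proof
  assume "fps_X ^ k dvd f"
  then obtain g where "f = fps_X ^ k * g" by (elim dvdE)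
  thus "\<forall>i<k. f $ i = 0" by (simp add: fps_X_power_mult_nth)
next
  assume "\<forall>i<k. f $ i = 0"
  hence "f = fps_X ^ k * fps_shift k f" by (intro fps_ext) (simp add: fps_X_power_mult_nth)
  thus "fps_X ^ k dvd f" by (metis dvd_triv_left)
qed

lemma fps_X_power_dvd_telescope:
  fixes xs :: "nat \<Rightarrow> 'a::comm_ring_1 fps"
  assumes step: "\<And>j. fps_X ^ Suc j dvd xs (Suc j) - xs j" and "j \<le> k"
  shows "fps_X ^ Suc j dvd xs k - xs j"
  using assms(2)
proof (induction k)
  case (Suc k)
  show ?case
  proof (cases "j = Suc k")
    case False
    have "fps_X ^ Suc j dvd fps_X ^ Suc k"
      using False Suc.prems by (intro le_imp_power_dvd) simp
    hence "fps_X ^ Suc j dvd xs (Suc k) - xs k" using step[of k] by (rule dvd_trans)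
    moreover have "fps_X ^ Suc j dvd xs k - xs j" using False Suc by simp
    ultimately have "fps_X ^ Suc j dvd (xs (Suc k) - xs k) + (xs k - xs j)" by (rule dvd_add)
    thus ?thesis by simp
  qed simp
qed simp

text \<open>The fixed point is the coefficientwise limit of the iterates.\<close>
lemma fps_contraction_fixpoint:
  fixes T :: "'a::comm_ring_1 fps \<Rightarrow> 'a fps"
  assumes contr: "\<And>x y j. fps_X ^ Suc j dvd x - y \<Longrightarrow> fps_X ^ Suc (Suc j) dvd T x - T y"
    and start: "fps_X dvd T x0 - x0"
  shows "\<exists>x. T x = x \<and> x $ 0 = x0 $ 0"
proof -
  define xs where "xs j = (T ^^ j) x0" for j
  have step: "fps_X ^ Suc j dvd xs (Suc j) - xs j" for j
  proof (induction j)
    case 0 thus ?case using start by (simp add: xs_def)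
  next
    case (Suc j) thus ?case using contr by (simp add: xs_def)
  qed
  have close: "fps_X ^ Suc j dvd xs k - xs j" if "j \<le> k" for j k
    using fps_X_power_dvd_telescope[OF step that] .
  define x where "x = Abs_fps (\<lambda>k. xs k $ k)"
  have x_nth: "x $ i = xs k $ i" if "i \<le> k" for i k
  proof -
    have "(xs k - xs i) $ i = 0" using close[OF that] unfolding fps_X_power_dvd_iff by simp
    thus ?thesis by (simp add: x_def)
  qed
  have "T x = x"
  proof (rule fps_ext)
    fix k
    have "fps_X ^ Suc k dvd x - xs k" unfolding fps_X_power_dvd_iff by (simp add: x_nth)
    hence "fps_X ^ Suc (Suc k) dvd T x - T (xs k)" by (rule contr)
    hence "(T x - T (xs k)) $ k = 0" unfolding fps_X_power_dvd_iff by simp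
    hence "T x $ k = T (xs k) $ k" by simp
    also have "\<dots> = x $ k" using x_nth[of k "Suc k"] by (simp add: xs_def)
    finally show "T x $ k = x $ k" .
  qed
  thus ?thesis using x_nth[of 0 0] by (auto simp: xs_def)
qed

lemma qpoly_fps_linear_part:
  fixes C :: "nat \<Rightarrow> 'a::comm_ring_1 fps"
  assumes z: "fps_X ^ Suc j dvd z"
  shows "fps_X ^ Suc (Suc j) dvd poly (qpoly TYPE('k::{finite,field}) n C) z - fps_const (C 0 $ 0) * z"
proof -
  define \<beta> where "\<beta> = C 0 $ 0"
  have "fps_X dvd C 0 - fps_const \<beta>" by (simp add: fps_X_power_dvd_iff[of 1, simplified] \<beta>_def)
  hence "fps_X * fps_X ^ Suc j dvd (C 0 - fps_const \<beta>) * z" using z by (rule mult_dvd_mono)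
  hence lin: "fps_X ^ Suc (Suc j) dvd (C 0 - fps_const \<beta>) * z" by (simp only: power_Suc)
  have high: "fps_X ^ Suc (Suc j) dvd C i * z ^ (CARD('k) ^ i)" if "i \<in> {..n} - {0}" for i
  proof -
    have "2 \<le> CARD('k) ^ i"
      using that card_finite_field_ge_2[where 'k='k] card_power_le_iff[where 'k='k, of 1 i] by auto
    hence "Suc j * 2 \<le> Suc j * CARD('k) ^ i" by (rule mult_le_mono2)
    hence "Suc (Suc j) \<le> Suc j * CARD('k) ^ i" by (rule le_trans[rotated]) simp
    hence "fps_X ^ Suc (Suc j) dvd fps_X ^ (Suc j * CARD('k) ^ i)" by (rule le_imp_power_dvd)
    also have "\<dots> = (fps_X ^ Suc j) ^ (CARD('k) ^ i)" by (rule power_mult)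
    also have "\<dots> dvd z ^ (CARD('k) ^ i)" using z by (rule dvd_power_same)
    finally show ?thesis by simp
  qed
  define H where "H = (\<Sum>i\<in>{..n} - {0}. C i * z ^ (CARD('k) ^ i))"
  have "poly (qpoly TYPE('k) n C) z = C 0 * z + H"
    by (simp add: H_def poly_qpoly sum.remove[of "{..n}" 0])
  hence "poly (qpoly TYPE('k) n C) z - fps_const \<beta> * z = (C 0 - fps_const \<beta>) * z + H"
    by (simp add: left_diff_distrib diff_add_eq)
  moreover have "fps_X ^ Suc (Suc j) dvd H"
    unfolding H_def using high by (rule dvd_sum)
  ultimately show ?thesis using lin by (simp add: dvd_add \<beta>_def)
qed

text \<open>Newton's iteration \<open>x \<mapsto> x - P x / C\<^sub>0(0)\<close> converges: \<open>P\<close> is additive, and apart from the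
  linear one its terms raise the X-adic order.\<close>
theorem hensel_qpoly:
  fixes C :: "nat \<Rightarrow> 'a::field fps"
  assumes char: "CHAR('a) = CHAR('k::{finite,field})"
    and unit: "C 0 $ 0 \<noteq> 0"
    and root: "poly (qpoly TYPE('k) n (\<lambda>i. C i $ 0)) c = 0"
  shows "\<exists>x. poly (qpoly TYPE('k) n C) x = 0 \<and> x $ 0 = c"
proof -
  define P where "P x = poly (qpoly TYPE('k) n C) x" for x
  define \<beta> where "\<beta> = C 0 $ 0"
  define T where "T x = x - fps_const (inverse \<beta>) * P x" for x
  have char_fps: "CHAR('a fps) = CHAR('k)" using char by simp
  have linear_part: "fps_X ^ Suc (Suc j) dvd P z - fps_const \<beta> * z" if "fps_X ^ Suc j dvd z" for z j
    using qpoly_fps_linear_part[OF that] by (simp add: P_def \<beta>_def)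
  have contr: "fps_X ^ Suc (Suc j) dvd T x - T y" if "fps_X ^ Suc j dvd x - y" for x y j
  proof -
    define z where "z = x - y"
    have cancel: "fps_const (inverse \<beta>) * (fps_const \<beta> * z) = z"
      using unit by (simp add: \<beta>_def mult.assoc[symmetric] flip: fps_const_mult)
    have "T x - T y = z - fps_const (inverse \<beta>) * (P x - P y)"
      by (simp add: T_def z_def algebra_simps)
    also have "P x - P y = P z" by (simp add: P_def z_def poly_qpoly_diff[OF char_fps])
    also have "z - fps_const (inverse \<beta>) * P z = fps_const (inverse \<beta>) * (fps_const \<beta> * z - P z)"
      by (simp add: right_diff_distrib cancel)
    finally have "T x - T y = fps_const (inverse \<beta>) * (fps_const \<beta> * z - P z)" .
    moreover have "fps_X ^ Suc (Suc j) dvd fps_const \<beta> * z - P z"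
      using linear_part[of j z] that by (simp add: z_def dvd_diff_commute)
    ultimately show ?thesis by simp
  qed
  have "P (fps_const c) $ 0 = 0"
    using root by (simp add: P_def poly_qpoly fps_sum_nth)
  hence "fps_X dvd T (fps_const c) - fps_const c"
    by (simp add: T_def fps_X_power_dvd_iff[of 1, simplified])
  then obtain x where x: "T x = x" "x $ 0 = c"
    using fps_contraction_fixpoint[OF contr] by fastforce
  have "P x = 0" using x(1) unit by (simp add: T_def \<beta>_def)
  thus ?thesis using x(2) by (auto simp: P_def)
qed

section \<open>Subfields and extension of homomorphisms\<close>

definition poly_over :: "'a::field set \<Rightarrow> 'a poly \<Rightarrow> bool" where
  "poly_over S g \<longleftrightarrow> (\<forall>i. coeff g i \<in> S)"

definition hom_on :: "'a::field set \<Rightarrow> ('a \<Rightarrow> 'b::field) \<Rightarrow> bool" where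
  "hom_on S h \<longleftrightarrow> h 1 = 1 \<and> (\<forall>x\<in>S. \<forall>y\<in>S. h (x + y) = h x + h y \<and> h (x * y) = h x * h y)"

definition adjoin :: "'a::field set \<Rightarrow> 'a \<Rightarrow> 'a set" where
  "adjoin S \<alpha> = {poly g \<alpha> | g. poly_over S g}"

lemma subfieldD:
  assumes "is_subfield S"
  shows "0 \<in> S" "1 \<in> S" "x \<in> S \<Longrightarrow> y \<in> S \<Longrightarrow> x + y \<in> S" "x \<in> S \<Longrightarrow> y \<in> S \<Longrightarrow> x * y \<in> S"
    "x \<in> S \<Longrightarrow> - x \<in> S" "x \<in> S \<Longrightarrow> inverse x \<in> S"
  using assms unfolding is_subfield_def by auto

lemma subfield_diff: "is_subfield S \<Longrightarrow> x \<in> S \<Longrightarrow> y \<in> S \<Longrightarrow> x - y \<in> S"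
  using subfieldD(3)[of S x "- y"] subfieldD(5)[of S y] by simp

lemma subfield_sum: "is_subfield S \<Longrightarrow> (\<And>i. i \<in> I \<Longrightarrow> f i \<in> S) \<Longrightarrow> sum f I \<in> S"
  by (induction I rule: infinite_finite_induct) (simp_all add: subfieldD(1,3))

lemma is_subfield_Inter: "(\<And>S. S \<in> F \<Longrightarrow> is_subfield S) \<Longrightarrow> is_subfield (\<Inter>F)"
  unfolding is_subfield_def by blast

lemma is_subfield_UNIV [simp]: "is_subfield UNIV"
  by (simp add: is_subfield_def)

lemma poly_over_UNIV [simp]: "poly_over UNIV g"
  by (simp add: poly_over_def)

lemma poly_over_0: "is_subfield S \<Longrightarrow> poly_over S 0"
  by (simp add: poly_over_def subfieldD(1))

lemma poly_over_mono: "S \<subseteq> T \<Longrightarrow> poly_over S p \<Longrightarrow> poly_over T p"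
  by (auto simp: poly_over_def)

lemma poly_over_pCons: "poly_over S (pCons c g) \<longleftrightarrow> c \<in> S \<and> poly_over S g"
  unfolding poly_over_def by (metis coeff_pCons_0 coeff_pCons_Suc not0_implies_Suc)

lemma poly_over_const: "is_subfield S \<Longrightarrow> c \<in> S \<Longrightarrow> poly_over S [:c:]"
  by (simp add: poly_over_def coeff_pCons subfieldD(1) split: nat.split)

lemma poly_over_monom: "is_subfield S \<Longrightarrow> c \<in> S \<Longrightarrow> poly_over S (monom c k)"
  by (simp add: poly_over_def coeff_monom subfieldD(1))

lemma poly_over_add: "is_subfield S \<Longrightarrow> poly_over S g \<Longrightarrow> poly_over S h \<Longrightarrow> poly_over S (g + h)"
  by (simp add: poly_over_def subfieldD(3))

lemma poly_over_diff: "is_subfield S \<Longrightarrow> poly_over S g \<Longrightarrow> poly_over S h \<Longrightarrow> poly_over S (g - h)"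
  by (simp add: poly_over_def subfield_diff)

lemma poly_over_mult: "is_subfield S \<Longrightarrow> poly_over S g \<Longrightarrow> poly_over S h \<Longrightarrow> poly_over S (g * h)"
  unfolding poly_over_def coeff_mult by (blast intro: subfield_sum subfieldD(4))

lemma poly_over_smult: "is_subfield S \<Longrightarrow> c \<in> S \<Longrightarrow> poly_over S g \<Longrightarrow> poly_over S (smult c g)"
  by (simp add: poly_over_def subfieldD(4))

lemma poly_over_qpoly:
  "is_subfield S \<Longrightarrow> (\<And>i. i \<le> n \<Longrightarrow> c i \<in> S) \<Longrightarrow> poly_over S (qpoly TYPE('k::{finite,field}) n c)"
  by (auto simp: poly_over_def coeff_qpoly intro!: subfield_sum subfieldD(1))

lemma poly_in_closed_set:
  assumes "is_subfield S" "poly_over S g" "S \<subseteq> T" "x \<in> T"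
    and "\<And>u v. u \<in> T \<Longrightarrow> v \<in> T \<Longrightarrow> u + v \<in> T" "\<And>u v. u \<in> T \<Longrightarrow> v \<in> T \<Longrightarrow> u * v \<in> T"
  shows "poly g x \<in> T"
  using assms(2)
proof (induction g)
  case 0 thus ?case using assms(1,3) subfieldD(1) by auto
next
  case (pCons c g)
  thus ?case using assms by (auto simp: poly_over_pCons)
qed

lemma hom_onD:
  assumes "hom_on S h" "is_subfield S"
  shows "h 0 = 0" "h 1 = 1" "x \<in> S \<Longrightarrow> y \<in> S \<Longrightarrow> h (x + y) = h x + h y"
    "x \<in> S \<Longrightarrow> y \<in> S \<Longrightarrow> h (x * y) = h x * h y"
    "x \<in> S \<Longrightarrow> h (- x) = - h x" "x \<in> S \<Longrightarrow> y \<in> S \<Longrightarrow> h (x - y) = h x - h y"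
    "x \<in> S \<Longrightarrow> h (inverse x) = inverse (h x)" "x \<in> S \<Longrightarrow> h x = 0 \<longleftrightarrow> x = 0"
proof -
  note S = subfieldD[OF assms(2)]
  have add: "h (x + y) = h x + h y" and mult: "h (x * y) = h x * h y" if "x \<in> S" "y \<in> S" for x y
    using assms(1) that unfolding hom_on_def by blast+
  show h0: "h 0 = 0" using add[OF S(1) S(1)] by (metis add_0_right add_cancel_left_right)
  show h1: "h 1 = 1" using assms(1) by (simp add: hom_on_def)
  show "x \<in> S \<Longrightarrow> y \<in> S \<Longrightarrow> h (x + y) = h x + h y" "x \<in> S \<Longrightarrow> y \<in> S \<Longrightarrow> h (x * y) = h x * h y"
    by (fact add, fact mult)
  show neg: "h (- x) = - h x" if "x \<in> S" for x
    using add[OF that S(5)[OF that]] h0 by (simp add: eq_neg_iff_add_eq_0 add.commute)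
  show "x \<in> S \<Longrightarrow> y \<in> S \<Longrightarrow> h (x - y) = h x - h y"
    using add[of x "- y"] neg[of y] S(5) by simp
  have inv: "h x * h (inverse x) = 1" if "x \<in> S" "x \<noteq> 0" for x
    using mult[OF that(1) S(6)[OF that(1)]] that(2) h1 by simp
  show "h (inverse x) = inverse (h x)" if "x \<in> S" for x
    using inv[OF that] h0 by (cases "x = 0") (simp_all add: inverse_unique)
  show "h x = 0 \<longleftrightarrow> x = 0" if "x \<in> S" for x
    using inv[OF that] h0 by force
qed

lemma inj_on_hom_on:
  assumes "hom_on S h" "is_subfield S"
  shows "inj_on h S"
proof (rule inj_onI)
  fix x y assume "x \<in> S" "y \<in> S" "h x = h y"
  hence "h (x - y) = 0" "x - y \<in> S" using hom_onD[OF assms] subfield_diff[OF assms(2)] by auto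
  thus "x = y" using hom_onD(8)[OF assms] by simp
qed

lemma hom_on_comp: "hom_on S \<tau> \<Longrightarrow> hom_on UNIV \<phi> \<Longrightarrow> hom_on S (\<phi> \<circ> \<tau>)"
  by (simp add: hom_on_def)

lemma is_subfield_image:
  assumes "is_subfield S" "hom_on S h"
  shows "is_subfield (h ` S)"
  unfolding is_subfield_def
proof (intro conjI ballI)
  note hD = hom_onD[OF assms(2,1)] and SD = subfieldD[OF assms(1)]
  show "0 \<in> h ` S" "1 \<in> h ` S" using SD(1,2) hD(1,2) by (metis imageI)+
  fix x y assume "x \<in> h ` S" "y \<in> h ` S"
  then obtain x' y' where x: "x' \<in> S" "x = h x'" and y: "y' \<in> S" "y = h y'" by blast
  show "x + y \<in> h ` S" using x y SD(3)[OF x(1) y(1)] hD(3)[OF x(1) y(1)] by (simp add: rev_image_eqI)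
  show "x * y \<in> h ` S" using x y SD(4)[OF x(1) y(1)] hD(4)[OF x(1) y(1)] by (simp add: rev_image_eqI)
  show "- x \<in> h ` S" using x SD(5)[OF x(1)] hD(5)[OF x(1)] by (simp add: rev_image_eqI)
  show "inverse x \<in> h ` S" using x SD(6)[OF x(1)] hD(7)[OF x(1)] by (simp add: rev_image_eqI)
qed

lemma is_subfield_preimage:
  assumes "is_subfield S" "hom_on S h" "is_subfield T"
  shows "is_subfield {x \<in> S. h x \<in> T}"
  unfolding is_subfield_def
proof (intro conjI ballI)
  note S = subfieldD[OF assms(1)] and T = subfieldD[OF assms(3)] and hD = hom_onD[OF assms(2,1)]
  show "0 \<in> {x \<in> S. h x \<in> T}" "1 \<in> {x \<in> S. h x \<in> T}" using S(1,2) T(1,2) hD(1,2) by simp_all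
  fix x y assume "x \<in> {x \<in> S. h x \<in> T}" "y \<in> {x \<in> S. h x \<in> T}"
  thus "x + y \<in> {x \<in> S. h x \<in> T}" "x * y \<in> {x \<in> S. h x \<in> T}"
    "- x \<in> {x \<in> S. h x \<in> T}" "inverse x \<in> {x \<in> S. h x \<in> T}"
    by (simp_all add: S T hD(3-5,7))
qed

lemma hom_on_conjugate:
  fixes \<tau> :: "'a::field \<Rightarrow> 'b::field"
  assumes L: "is_subfield L" and \<tau>: "hom_on L \<tau>" and \<phi>: "hom_on UNIV \<phi>"
    and img: "\<And>x. x \<in> L \<Longrightarrow> \<phi> (\<tau> x) \<in> \<tau> ` L"
  shows "\<exists>\<sigma>. (\<forall>x\<in>L. \<sigma> x \<in> L \<and> \<tau> (\<sigma> x) = \<phi> (\<tau> x)) \<and> inj_on \<sigma> L \<and> hom_on L \<sigma>"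
proof -
  define \<sigma> where "\<sigma> x = inv_into L \<tau> (\<phi> (\<tau> x))" for x
  note tD = hom_onD[OF \<tau> L] and pD = hom_onD[OF \<phi> is_subfield_UNIV] and LD = subfieldD[OF L]
  have \<tau>inj: "inj_on \<tau> L" by (rule inj_on_hom_on[OF \<tau> L])
  have \<sigma>L: "\<sigma> x \<in> L" "\<tau> (\<sigma> x) = \<phi> (\<tau> x)" if "x \<in> L" for x
    using img[OF that] by (simp_all add: \<sigma>_def inv_into_into f_inv_into_f)
  have \<sigma>eqI: "\<sigma> x = y" if "x \<in> L" "y \<in> L" "\<tau> y = \<phi> (\<tau> x)" for x y
    by (rule inj_onD[OF \<tau>inj]) (simp_all add: \<sigma>L that)
  have "hom_on L \<sigma>"
    unfolding hom_on_def
  proof (intro conjI ballI)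
    show "\<sigma> 1 = 1" by (rule \<sigma>eqI) (simp_all add: LD tD pD)
    fix x y assume xy: "x \<in> L" "y \<in> L"
    show "\<sigma> (x + y) = \<sigma> x + \<sigma> y" by (rule \<sigma>eqI) (simp_all add: xy LD \<sigma>L tD pD)
    show "\<sigma> (x * y) = \<sigma> x * \<sigma> y" by (rule \<sigma>eqI) (simp_all add: xy LD \<sigma>L tD pD)
  qed
  moreover have "inj_on \<sigma> L"
  proof (rule inj_onI)
    fix x y assume xy: "x \<in> L" "y \<in> L" "\<sigma> x = \<sigma> y"
    hence "\<phi> (\<tau> x) = \<phi> (\<tau> y)" using \<sigma>L by metis
    hence "\<tau> x = \<tau> y" using inj_on_hom_on[OF \<phi> is_subfield_UNIV] by (auto dest: inj_onD)
    thus "x = y" using \<tau>inj xy by (auto dest: inj_onD)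
  qed
  ultimately show ?thesis using \<sigma>L by blast
qed

lemma hom_on_sum:
  assumes "hom_on S h" "is_subfield S" "\<And>i. i \<in> I \<Longrightarrow> f i \<in> S"
  shows "h (sum f I) = (\<Sum>i\<in>I. h (f i))"
  using assms(3)
proof (induction I rule: infinite_finite_induct)
  case (insert x F)
  thus ?case using subfield_sum[OF assms(2), of F f] by (simp add: hom_onD[OF assms(1,2)])
qed (simp_all add: hom_onD[OF assms(1,2)])

lemma map_poly_hom_add:
  assumes "hom_on S h" "is_subfield S" "poly_over S g1" "poly_over S g2"
  shows "map_poly h (g1 + g2) = map_poly h g1 + map_poly h g2"
  by (rule poly_eqI) (use assms in \<open>simp add: coeff_map_poly hom_onD poly_over_def\<close>)

lemma map_poly_hom_diff:
  assumes "hom_on S h" "is_subfield S" "poly_over S g1" "poly_over S g2"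
  shows "map_poly h (g1 - g2) = map_poly h g1 - map_poly h g2"
  by (rule poly_eqI) (use assms in \<open>simp add: coeff_map_poly hom_onD poly_over_def\<close>)

lemma map_poly_hom_mult:
  assumes "hom_on S h" "is_subfield S" "poly_over S g1" "poly_over S g2"
  shows "map_poly h (g1 * g2) = map_poly h g1 * map_poly h g2"
proof (rule poly_eqI)
  fix k
  have "coeff (map_poly h (g1 * g2)) k = (\<Sum>i\<le>k. h (coeff g1 i * coeff g2 (k - i)))"
    using assms by (simp add: coeff_map_poly coeff_mult hom_onD hom_on_sum poly_over_def subfieldD(4))
  also have "\<dots> = coeff (map_poly h g1 * map_poly h g2) k"
    using assms by (simp add: coeff_mult coeff_map_poly hom_onD poly_over_def)
  finally show "coeff (map_poly h (g1 * g2)) k = coeff (map_poly h g1 * map_poly h g2) k" .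
qed

lemma hom_on_poly:
  assumes "hom_on S h" "is_subfield S" "poly_over S g" "x \<in> S"
  shows "h (poly g x) = poly (map_poly h g) (h x)"
  using assms(3)
proof (induction g)
  case (pCons c g)
  have "poly g x \<in> S"
    using pCons.prems assms(2,4) by (intro poly_in_closed_set) (auto simp: poly_over_pCons subfieldD)
  thus ?case using pCons assms by (simp add: map_poly_pCons hom_onD poly_over_pCons subfieldD)
qed (simp add: hom_onD[OF assms(1,2)])

lemma poly_over_div_mod:
  assumes S: "is_subfield S" and f: "poly_over S f" "lead_coeff f = 1"
  shows "poly_over S g \<Longrightarrow> \<exists>u r. poly_over S u \<and> poly_over S r \<and> g = f * u + r \<and> (r = 0 \<or> degree r < degree f)"
proof (induction "degree g" arbitrary: g rule: less_induct)
  case less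
  show ?case
  proof (cases "g = 0 \<or> degree g < degree f")
    case True
    thus ?thesis using less.prems S by (intro exI[of _ 0] exI[of _ g]) (auto simp: poly_over_def subfieldD(1))
  next
    case False
    hence g0: "g \<noteq> 0" and dg: "degree f \<le> degree g" by auto
    have f0: "f \<noteq> 0" using f(2) by auto
    define m where "m = monom (lead_coeff g) (degree g - degree f)"
    define g' where "g' = g - m * f"
    have mS: "poly_over S m" unfolding m_def using less.prems S by (intro poly_over_monom) (simp_all add: poly_over_def)
    have g'S: "poly_over S g'" unfolding g'_def by (intro poly_over_diff poly_over_mult S less.prems mS f)
    have dmf: "degree (m * f) = degree g"
      using g0 f0 dg by (simp add: m_def degree_mult_eq degree_monom_eq)
    have lmf: "lead_coeff (m * f) = lead_coeff g"
      by (simp add: lead_coeff_mult m_def f(2) degree_monom_eq g0 lead_coeff_monom)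
    have "g' = 0 \<or> degree g' < degree g"
    proof (rule ccontr)
      assume "\<not> (g' = 0 \<or> degree g' < degree g)"
      moreover have "degree g' \<le> degree g" unfolding g'_def using degree_diff_le[of g "degree g" "m * f"] dmf by simp
      ultimately have "g' \<noteq> 0" "degree g' = degree g" by auto
      moreover have "coeff g' (degree g) = 0" unfolding g'_def using lmf dmf by simp
      ultimately show False by (metis leading_coeff_0_iff)
    qed
    thus ?thesis
    proof
      assume "g' = 0"
      thus ?thesis using mS S by (intro exI[of _ m] exI[of _ 0]) (auto simp: g'_def poly_over_def subfieldD(1))
    next
      assume "degree g' < degree g"
      then obtain u r where ur: "poly_over S u" "poly_over S r" "g' = f * u + r" "r = 0 \<or> degree r < degree f"
        using less.hyps g'S by blast
      have "g = f * (u + m) + r" using ur(3) unfolding g'_def by (simp add: algebra_simps)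
      thus ?thesis using ur poly_over_add[OF S ur(1) mS] by blast
    qed
  qed
qed

lemma minimal_poly_over:
  assumes S: "is_subfield S" and alg: "p \<noteq> 0" "poly_over S p" "poly p \<alpha> = 0"
  obtains f where "poly_over S f" "lead_coeff f = 1" "poly f \<alpha> = 0" "degree f > 0"
    "\<And>g. poly_over S g \<Longrightarrow> poly g \<alpha> = 0 \<Longrightarrow> \<exists>u. poly_over S u \<and> g = f * u"
    "\<And>g. poly_over S g \<Longrightarrow> g \<noteq> 0 \<Longrightarrow> poly g \<alpha> = 0 \<Longrightarrow> degree f \<le> degree g"
proof -
  obtain p' where p': "p' \<noteq> 0 \<and> poly_over S p' \<and> poly p' \<alpha> = 0"
    and least: "\<And>g. g \<noteq> 0 \<and> poly_over S g \<and> poly g \<alpha> = 0 \<Longrightarrow> degree p' \<le> degree g"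
    using ex_has_least_nat[of "\<lambda>g. g \<noteq> 0 \<and> poly_over S g \<and> poly g \<alpha> = 0" p degree] alg by blast
  define f where "f = smult (inverse (lead_coeff p')) p'"
  have "lead_coeff p' \<in> S" using p' by (simp add: poly_over_def)
  hence fS: "poly_over S f" unfolding f_def using p' S by (intro poly_over_smult subfieldD(6)) auto
  have lf: "lead_coeff f = 1" and df: "degree f = degree p'" and pf: "poly f \<alpha> = 0"
    using p' by (simp_all add: f_def)
  have fmin: "degree f \<le> degree g" if "poly_over S g" "g \<noteq> 0" "poly g \<alpha> = 0" for g
    using least that df by simp
  have "degree f > 0"
  proof (rule ccontr)
    assume "\<not> degree f > 0"
    hence "f = 1" using lf by (metis degree_0_id gr0I one_pCons)
    thus False using pf by simp
  qed
  moreover have "\<exists>u. poly_over S u \<and> g = f * u" if gS: "poly_over S g" and g\<alpha>: "poly g \<alpha> = 0" for g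
  proof -
    obtain u r where ur: "poly_over S u" "poly_over S r" "g = f * u + r" "r = 0 \<or> degree r < degree f"
      using poly_over_div_mod[OF S fS lf gS] by blast
    have "poly r \<alpha> = 0" using ur(3) g\<alpha> pf by simp
    hence "r = 0" using ur(4) fmin[OF ur(2)] by fastforce
    thus ?thesis using ur by auto
  qed
  ultimately show ?thesis using that fS lf pf fmin by blast
qed

lemma adjoin_closed:
  assumes S: "is_subfield S"
  shows "S \<subseteq> adjoin S \<alpha>" "\<alpha> \<in> adjoin S \<alpha>"
    "x \<in> adjoin S \<alpha> \<Longrightarrow> y \<in> adjoin S \<alpha> \<Longrightarrow> x + y \<in> adjoin S \<alpha>"
    "x \<in> adjoin S \<alpha> \<Longrightarrow> y \<in> adjoin S \<alpha> \<Longrightarrow> x * y \<in> adjoin S \<alpha>"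
    "x \<in> adjoin S \<alpha> \<Longrightarrow> - x \<in> adjoin S \<alpha>"
proof -
  show "S \<subseteq> adjoin S \<alpha>"
    unfolding adjoin_def using poly_over_const[OF S] by (force intro!: exI[of _ "[:_:]"])
  have "poly_over S [:0, 1:]" using S by (simp add: poly_over_pCons poly_over_0 subfieldD)
  thus "\<alpha> \<in> adjoin S \<alpha>" unfolding adjoin_def by (force intro!: exI[of _ "[:0, 1:]"])
  show "x + y \<in> adjoin S \<alpha>" "x * y \<in> adjoin S \<alpha>" if x: "x \<in> adjoin S \<alpha>" and y: "y \<in> adjoin S \<alpha>"
  proof -
    obtain g1 g2 where g: "poly_over S g1" "x = poly g1 \<alpha>" "poly_over S g2" "y = poly g2 \<alpha>"
      using x y unfolding adjoin_def by blast
    show "x + y \<in> adjoin S \<alpha>"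
      unfolding adjoin_def using g by (auto intro!: exI[of _ "g1 + g2"] poly_over_add S)
    show "x * y \<in> adjoin S \<alpha>"
      unfolding adjoin_def using g by (auto intro!: exI[of _ "g1 * g2"] poly_over_mult S)
  qed
  show "- x \<in> adjoin S \<alpha>" if x: "x \<in> adjoin S \<alpha>"
  proof -
    obtain g where "poly_over S g" "x = poly g \<alpha>" using x unfolding adjoin_def by blast
    thus "- x \<in> adjoin S \<alpha>" unfolding adjoin_def
      by (auto intro!: exI[of _ "- g"] simp: poly_over_def subfieldD(5)[OF S])
  qed
qed

text \<open>The inverse of \<open>y \<noteq> 0\<close> is a polynomial in \<open>y\<close>: if \<open>f = c + T f'\<close> is the minimal polynomial
  of \<open>y\<close> then \<open>c \<noteq> 0\<close> and \<open>y\<^sup>-\<^sup>1 = - f'(y) / c\<close>.\<close>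
lemma adjoin_subfield:
  assumes S: "is_subfield S"
    and alg: "\<And>y. \<exists>p. p \<noteq> 0 \<and> poly_over S p \<and> poly p y = 0"
  shows "is_subfield (adjoin S \<alpha>)"
proof -
  note cl = adjoin_closed[OF S, where \<alpha> = \<alpha>]
  have "inverse y \<in> adjoin S \<alpha>" if y: "y \<in> adjoin S \<alpha>" "y \<noteq> 0" for y
  proof -
    obtain p where "p \<noteq> 0" "poly_over S p" "poly p y = 0" using alg by blast
    then obtain f where f: "poly_over S f" "poly f y = 0" "degree f > 0"
      and fmin: "\<And>g. poly_over S g \<Longrightarrow> g \<noteq> 0 \<Longrightarrow> poly g y = 0 \<Longrightarrow> degree f \<le> degree g"
      by (rule minimal_poly_over[OF S]) blast
    obtain c f' where cf: "f = pCons c f'" by (cases f)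
    have cS: "c \<in> S" and f'S: "poly_over S f'" using f(1) cf by (auto simp: poly_over_pCons)
    have f'0: "f' \<noteq> 0" using f(3) cf by auto
    have eq: "c + y * poly f' y = 0" using f(2) cf by simp
    have "c \<noteq> 0"
    proof
      assume "c = 0"
      hence "poly f' y = 0" using eq y(2) by simp
      thus False using fmin[OF f'S f'0] cf f'0 by simp
    qed
    hence "inverse y = poly (smult (- inverse c) f') y"
      using eq by (intro inverse_unique) (simp add: field_simps add_eq_0_iff)
    moreover have "poly (smult (- inverse c) f') y \<in> adjoin S \<alpha>"
      using S cS f'S y(1) cl
      by (intro poly_in_closed_set[where S = S] poly_over_smult subfieldD(5,6)) auto
    ultimately show ?thesis by simp
  qed
  moreover have "0 \<in> adjoin S \<alpha>" "1 \<in> adjoin S \<alpha>" using cl(1) subfieldD(1,2)[OF S] by auto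
  ultimately show ?thesis using cl(3-5) unfolding is_subfield_def by (metis inverse_zero)
qed

lemma adjoin_subset:
  assumes "is_subfield S" "is_subfield L" "S \<subseteq> L" "\<alpha> \<in> L"
  shows "adjoin S \<alpha> \<subseteq> L"
  using assms poly_in_closed_set[OF assms(1) _ assms(3,4)] subfieldD(3,4)[OF assms(2)]
  unfolding adjoin_def by blast

text \<open>Send \<open>\<alpha>\<close> to a root \<open>\<beta>\<close> of the image of its minimal polynomial \<open>f\<close>; the map
  \<open>g(\<alpha>) \<mapsto> (h g)(\<beta>)\<close> is well defined because \<open>f\<close> divides every \<open>g\<close> over \<open>S\<close> vanishing at \<open>\<alpha>\<close>.\<close>
lemma hom_on_extend_adjoin:
  fixes h :: "'a::field \<Rightarrow> 'b::field"
  assumes S: "is_subfield S" and h: "hom_on S h"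
    and f0: "poly_over S f0" "f0 \<noteq> 0" "poly f0 \<alpha> = 0"
    and split: "\<And>D. D dvd map_poly h f0 \<Longrightarrow> degree D > 0 \<Longrightarrow> \<exists>b. poly D b = 0"
  shows "\<exists>h'. hom_on (adjoin S \<alpha>) h' \<and> (\<forall>x\<in>S. h' x = h x)"
proof -
  obtain f where f: "poly_over S f" "lead_coeff f = 1" "poly f \<alpha> = 0" "degree f > 0"
    and fdvd: "\<And>g. poly_over S g \<Longrightarrow> poly g \<alpha> = 0 \<Longrightarrow> \<exists>u. poly_over S u \<and> g = f * u"
    by (rule minimal_poly_over[OF S f0(2,1,3)]) blast
  note hD = hom_onD[OF h S]
  obtain u where u: "poly_over S u" "f0 = f * u" using fdvd[OF f0(1,3)] by blast
  hence "map_poly h f dvd map_poly h f0" using map_poly_hom_mult[OF h S f(1) u(1)] by simp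
  moreover have "degree (map_poly h f) = degree f"
    by (rule map_poly_degree_eq) (simp add: f(2) hD(2))
  ultimately obtain \<beta> where \<beta>: "poly (map_poly h f) \<beta> = 0" using split f(4) by metis
  define h' where "h' y = poly (map_poly h (SOME g. poly_over S g \<and> poly g \<alpha> = y)) \<beta>" for y
  have h'_poly: "h' (poly g \<alpha>) = poly (map_poly h g) \<beta>" if gS: "poly_over S g" for g
  proof -
    define g' where "g' = (SOME g'. poly_over S g' \<and> poly g' \<alpha> = poly g \<alpha>)"
    have g': "poly_over S g'" "poly g' \<alpha> = poly g \<alpha>"
      using someI_ex[of "\<lambda>g'. poly_over S g' \<and> poly g' \<alpha> = poly g \<alpha>"] gS unfolding g'_def by blast+
    obtain w where w: "poly_over S w" "g' - g = f * w"
      using fdvd[OF poly_over_diff[OF S g'(1) gS]] g'(2) by auto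
    have "map_poly h g' - map_poly h g = map_poly h f * map_poly h w"
      using map_poly_hom_diff[OF h S g'(1) gS] map_poly_hom_mult[OF h S f(1) w(1)] w(2) by simp
    hence "poly (map_poly h g') \<beta> = poly (map_poly h g) \<beta>"
      using \<beta> by (metis diff_eq_eq mult_zero_left poly_add poly_mult add_0)
    thus ?thesis unfolding h'_def g'_def[symmetric] .
  qed
  have "hom_on (adjoin S \<alpha>) h'"
    unfolding hom_on_def
  proof (intro conjI ballI)
    show "h' 1 = 1" using h'_poly[OF poly_over_const[OF S subfieldD(2)[OF S]]] by (simp add: hD(1,2) map_poly_pCons)
    fix x y assume "x \<in> adjoin S \<alpha>" "y \<in> adjoin S \<alpha>"
    then obtain g1 g2 where g: "poly_over S g1" "x = poly g1 \<alpha>" "poly_over S g2" "y = poly g2 \<alpha>"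
      unfolding adjoin_def by blast
    show "h' (x + y) = h' x + h' y"
      using h'_poly[OF poly_over_add[OF S g(1,3)]] map_poly_hom_add[OF h S g(1,3)] g h'_poly by simp
    show "h' (x * y) = h' x * h' y"
      using h'_poly[OF poly_over_mult[OF S g(1,3)]] map_poly_hom_mult[OF h S g(1,3)] g h'_poly by simp
  qed
  moreover have "h' x = h x" if "x \<in> S" for x
    using h'_poly[OF poly_over_const[OF S that]] by (simp add: hD(1) map_poly_pCons)
  ultimately show ?thesis by blast
qed

theorem hom_on_extend_roots:
  fixes h0 :: "'a::field \<Rightarrow> 'b::field"
  assumes K: "is_subfield K" and h0: "hom_on K h0"
    and alg: "\<And>y. \<exists>p. p \<noteq> 0 \<and> poly_over K p \<and> poly p y = 0"
    and f: "poly_over K f" "f \<noteq> 0"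
    and split: "\<And>D. D dvd map_poly h0 f \<Longrightarrow> degree D > 0 \<Longrightarrow> \<exists>b. poly D b = 0"
    and L: "is_subfield L" "K \<subseteq> L" "{x. poly f x = 0} \<subseteq> L"
  shows "\<exists>S h. is_subfield S \<and> K \<union> {x. poly f x = 0} \<subseteq> S \<and> S \<subseteq> L \<and> hom_on S h \<and> (\<forall>x\<in>K. h x = h0 x)"
proof -
  have "\<exists>S h. is_subfield S \<and> K \<union> R \<subseteq> S \<and> S \<subseteq> L \<and> hom_on S h \<and> (\<forall>x\<in>K. h x = h0 x)"
    if "finite R" "R \<subseteq> {x. poly f x = 0}" for R
    using that
  proof (induction R rule: finite_induct)
    case empty
    show ?case using K L(2) h0 by blast
  next
    case (insert v R)
    then obtain S h where S: "is_subfield S" "K \<union> R \<subseteq> S" "S \<subseteq> L" "hom_on S h" "\<forall>x\<in>K. h x = h0 x"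
      by auto
    have fS: "poly_over S f" using f(1) S(2) by (auto simp: poly_over_def)
    have "map_poly h f = map_poly h0 f"
      by (rule poly_eqI) (use f(1) S(5) in \<open>simp add: coeff_map_poly hom_onD(1)[OF S(4,1)]
          hom_onD(1)[OF h0 K] poly_over_def\<close>)
    hence split_h: "\<exists>b. poly D b = 0" if "D dvd map_poly h f" "degree D > 0" for D
      using split that by simp
    have "poly f v = 0" using insert.prems by simp
    then obtain h' where h': "hom_on (adjoin S v) h'" "\<forall>x\<in>S. h' x = h x"
      using hom_on_extend_adjoin[OF S(1,4) fS f(2) _ split_h] by blast
    have "\<exists>p. p \<noteq> 0 \<and> poly_over S p \<and> poly p y = 0" for y
      using alg[of y] S(2) poly_over_mono[of K S] by blast
    hence "is_subfield (adjoin S v)" by (rule adjoin_subfield[OF S(1)])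
    moreover have "K \<union> insert v R \<subseteq> adjoin S v" using S(2) adjoin_closed[OF S(1), of v] by auto
    moreover have "adjoin S v \<subseteq> L" using insert.prems L S by (intro adjoin_subset) auto
    ultimately show ?case using h' S(2,5) by (intro exI[of _ "adjoin S v"] exI[of _ h']) auto
  qed
  thus ?thesis using poly_roots_finite[OF f(2)] by blast
qed

section \<open>Laurent expansion of F_q(t) at t = \<lambda>\<close>

definition fract_lift :: "('a::idom \<Rightarrow> 'b::field) \<Rightarrow> 'a fract \<Rightarrow> 'b" where
  "fract_lift f x = (let (a, b) = (SOME (a, b). b \<noteq> 0 \<and> x = Fract a b) in f a / f b)"

lemma fract_lift_Fract:
  assumes mult: "\<And>a b. f (a * b) = f a * f b" and inj: "\<And>a. f a = 0 \<longleftrightarrow> a = 0" and "b \<noteq> 0"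
  shows "fract_lift f (Fract a b) = f a / f b"
proof -
  define p where "p = (SOME (a', b'). b' \<noteq> 0 \<and> Fract a b = Fract a' b')"
  have "case p of (a', b') \<Rightarrow> b' \<noteq> 0 \<and> Fract a b = Fract a' b'"
    unfolding p_def using assms(3) by (intro someI[of "\<lambda>(a', b'). b' \<noteq> 0 \<and> Fract a b = Fract a' b'" "(a, b)"]) simp
  then obtain a' b' where p: "p = (a', b')" "b' \<noteq> 0" "Fract a b = Fract a' b'" by (cases p) auto
  hence "f a * f b' = f a' * f b" using assms(3) by (simp add: eq_fract flip: mult)
  hence "f a' / f b' = f a / f b" using p(2) assms(3) inj by (simp add: field_simps)
  thus ?thesis by (simp add: fract_lift_def p_def[symmetric] p(1))
qed

lemma hom_on_fract_lift:
  assumes add: "\<And>a b. f (a + b) = f a + f b" and mult: "\<And>a b. f (a * b) = f a * f b"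
    and inj: "\<And>a. f a = 0 \<longleftrightarrow> a = 0"
  shows "hom_on UNIV (fract_lift f)"
proof -
  note lift = fract_lift_Fract[of f, OF mult inj]
  have "fract_lift f 1 = 1" using inj[of 1] lift[of 1 1] by (simp flip: One_fract_def)
  moreover have "fract_lift f (x + y) = fract_lift f x + fract_lift f y"
    and "fract_lift f (x * y) = fract_lift f x * fract_lift f y" for x y
    by (cases x, cases y, simp add: lift add mult inj field_simps)+
  ultimately show ?thesis by (simp add: hom_on_def)
qed

lemma hom_on_emb_const: "hom_on UNIV emb_const"
  by (simp add: hom_on_def)

text \<open>The substitution \<open>t = \<lambda> + s\<close>, with F_q embedded into the constants of the closure.\<close>
definition taylor_fps :: "'k::field \<Rightarrow> 'k poly \<Rightarrow> 'k ac fps" where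
  "taylor_fps lam p = fps_of_poly (map_poly emb_const (p \<circ>\<^sub>p [:lam, 1:]))"

lemma taylor_fps_add: "taylor_fps lam (p + q) = taylor_fps lam p + taylor_fps lam q"
  by (simp add: taylor_fps_def pcompose_add map_poly_hom_add[OF hom_on_emb_const] fps_of_poly_add)

lemma taylor_fps_mult: "taylor_fps lam (p * q) = taylor_fps lam p * taylor_fps lam q"
  by (simp add: taylor_fps_def pcompose_mult map_poly_hom_mult[OF hom_on_emb_const] fps_of_poly_mult)

lemma taylor_fps_eq_0_iff: "taylor_fps lam p = 0 \<longleftrightarrow> p = 0"
  by (simp add: taylor_fps_def map_poly_eq_0_iff pcompose_eq_0_iff flip: fps_of_poly_0)

lemma taylor_fps_1 [simp]: "taylor_fps lam 1 = 1"
  by (simp add: taylor_fps_def pcompose_1)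

lemma taylor_fps_nth: "taylor_fps lam p $ k = emb_const (coeff (p \<circ>\<^sub>p [:lam, 1:]) k)"
  by (simp add: taylor_fps_def coeff_map_poly)

lemma taylor_fps_nth_0: "taylor_fps lam p $ 0 = emb_const (poly p lam)"
  by (simp add: taylor_fps_nth poly_0_coeff_0[symmetric] poly_pcompose)

lemma taylor_fps_const: "taylor_fps lam [:c:] = fps_const (emb_const c)"
  by (simp add: taylor_fps_def map_poly_pCons fps_of_poly_const)

definition laurent_at :: "'k::field \<Rightarrow> 'k ratfun \<Rightarrow> 'k ac fls" where
  "laurent_at lam = fract_lift (\<lambda>p. fps_to_fls (taylor_fps lam p))"

lemma laurent_at_Fract: "b \<noteq> 0 \<Longrightarrow> laurent_at lam (Fract a b) = fps_to_fls (taylor_fps lam a) / fps_to_fls (taylor_fps lam b)"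
  unfolding laurent_at_def
  by (rule fract_lift_Fract) (simp_all add: taylor_fps_mult fls_times_fps_to_fls taylor_fps_eq_0_iff)

lemma laurent_at_poly: "laurent_at lam (Fract a 1) = fps_to_fls (taylor_fps lam a)"
  by (simp add: laurent_at_Fract)

lemma hom_on_laurent_at: "hom_on UNIV (laurent_at lam)"
  unfolding laurent_at_def
  by (rule hom_on_fract_lift) (simp_all add: taylor_fps_add taylor_fps_mult fls_times_fps_to_fls taylor_fps_eq_0_iff)

definition fls_frob :: "'k::{finite,field} itself \<Rightarrow> 'b::field fls \<Rightarrow> 'b fls" where
  "fls_frob _ f = Abs_fls (\<lambda>k. (f $$ k) ^ CARD('k))"

lemma fls_frob_nth: "fls_frob TYPE('k::{finite,field}) f $$ k = (f $$ k) ^ CARD('k)"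
proof -
  have "\<forall>\<^sub>\<infinity>n. (f $$ (- int n)) ^ CARD('k) = 0"
    by (rule eventually_mono[OF MOST_fls_neg_nth_eq_0]) (simp add: finite_UNIV_card_ge_0)
  thus ?thesis by (simp add: fls_frob_def)
qed

lemma fls_frob_eq_0_iff: "fls_frob TYPE('k::{finite,field}) f = 0 \<longleftrightarrow> f = 0"
  by (simp add: fls_eq_iff fls_frob_nth finite_UNIV_card_ge_0)

lemma fls_frob_subdegree: "fls_subdegree (fls_frob TYPE('k::{finite,field}) f) = fls_subdegree f"
  unfolding fls_subdegree_def by (simp add: fls_frob_eq_0_iff fls_frob_nth finite_UNIV_card_ge_0)

lemma hom_on_fls_frob:
  assumes "CHAR('b::field) = CHAR('k::{finite,field})"
  shows "hom_on UNIV (fls_frob TYPE('k) :: 'b fls \<Rightarrow> 'b fls)"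
  unfolding hom_on_def
proof (intro conjI ballI)
  show "fls_frob TYPE('k) 1 = (1 :: 'b fls)"
    by (rule fls_eqI) (simp add: fls_frob_nth finite_UNIV_card_ge_0)
  fix f g :: "'b fls"
  show "fls_frob TYPE('k) (f + g) = fls_frob TYPE('k) f + fls_frob TYPE('k) g"
    by (rule fls_eqI) (simp add: fls_frob_nth power_card_add[OF assms])
  show "fls_frob TYPE('k) (f * g) = fls_frob TYPE('k) f * fls_frob TYPE('k) g"
    by (rule fls_eqI) (simp add: fls_frob_nth fls_times_nth(2) fls_frob_subdegree
        power_card_sum[OF assms] power_mult_distrib)
qed

lemma fls_frob_taylor:
  "fls_frob TYPE('k::{finite,field}) (fps_to_fls (taylor_fps lam p)) = fps_to_fls (taylor_fps (lam :: 'k) p)"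
  by (rule fls_eqI) (simp add: fls_frob_nth taylor_fps_nth flip: emb_const_power
      add: finite_field_power_card_self)

lemma fls_frob_laurent_at: "fls_frob TYPE('k::{finite,field}) (laurent_at lam r) = laurent_at (lam :: 'k) r"
proof -
  obtain a b where r: "r = Fract a b" "b \<noteq> 0" by (cases r)
  note frob = hom_onD[OF hom_on_fls_frob[where 'k='k and 'b="'k ac"] is_subfield_UNIV]
  show ?thesis
    using r by (simp add: laurent_at_Fract divide_inverse frob fls_frob_taylor)
qed

section \<open>The roots of P over the Laurent series\<close>

definition addP_poly :: "nat \<Rightarrow> (nat \<Rightarrow> 'k::{finite,field} poly) \<Rightarrow> 'k ac poly" where
  "addP_poly n a = qpoly TYPE('k) n ((\<lambda>i. emb_poly (a i))(n := 1))"

definition addP_laurent :: "nat \<Rightarrow> (nat \<Rightarrow> 'k::{finite,field} poly) \<Rightarrow> 'k \<Rightarrow> 'k ac fls poly" where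
  "addP_laurent n a lam = qpoly TYPE('k) n ((\<lambda>i. fps_to_fls (taylor_fps lam (a i)))(n := 1))"

text \<open>The polynomial whose q-associate is the reduction of \<open>P\<close> at \<open>t = \<lambda>\<close>.\<close>
definition assoc_at :: "nat \<Rightarrow> (nat \<Rightarrow> 'k::field poly) \<Rightarrow> 'k \<Rightarrow> 'k poly" where
  "assoc_at n a lam = monom 1 n + (\<Sum>i<n. monom (poly (a i) lam) i)"

lemma addP_eq_poly: "addP n a x = poly (addP_poly n a) x"
  by (simp add: addP_def addP_poly_def poly_qpoly_monic)

lemma addP_poly_nonzero: "addP_poly n a \<noteq> 0"
  by (simp add: addP_poly_def qpoly_nonzero)

lemma roots_addP_finite: "finite (roots_addP n a)"
  unfolding roots_addP_def addP_eq_poly by (rule poly_roots_finite[OF addP_poly_nonzero])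

lemma card_roots_addP:
  assumes "a 0 \<noteq> (0 :: 'k::{finite,field} poly)"
  shows "card (roots_addP n a) = CARD('k) ^ n"
  unfolding roots_addP_def addP_eq_poly addP_poly_def using assms
  by (intro card_roots_qpoly) auto

lemma roots_addP_add: "x \<in> roots_addP n a \<Longrightarrow> y \<in> roots_addP n a \<Longrightarrow> x + y \<in> roots_addP n a"
  unfolding roots_addP_def addP_eq_poly addP_poly_def by (simp add: poly_qpoly_add)

lemma roots_addP_scale:
  "x \<in> roots_addP n (a :: nat \<Rightarrow> 'k::{finite,field} poly) \<Longrightarrow> emb_const c * x \<in> roots_addP n a"
  unfolding roots_addP_def addP_eq_poly addP_poly_def
  by (simp add: poly_qpoly power_mult_distrib mult.left_commute flip: sum_distrib_left)

lemma coeff_assoc_at: "coeff (assoc_at n a lam) i = (if i = n then 1 else if i < n then poly (a i) lam else 0)"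
  by (simp add: assoc_at_def coeff_sum coeff_monom)

lemma degree_assoc_at: "degree (assoc_at n a lam) = n"
  by (intro antisym degree_le le_degree) (auto simp: coeff_assoc_at)

lemma lead_coeff_assoc_at: "lead_coeff (assoc_at n a lam) = 1"
  by (simp add: degree_assoc_at coeff_assoc_at)

lemma coeff_0_assoc_at: "poly (a 0) lam \<noteq> 0 \<Longrightarrow> coeff (assoc_at n a lam) 0 \<noteq> 0"
  by (simp add: coeff_assoc_at)

lemma q_assoc_assoc_at:
  "q_assoc (assoc_at n a (lam :: 'k::{finite,field})) =
     poly (qpoly TYPE('k) n ((\<lambda>i. emb_const (poly (a i) lam))(n := 1)))"
  unfolding q_assoc_def degree_assoc_at by (intro arg_cong[where f = poly] qpoly_cong) (simp add: coeff_assoc_at)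

lemma fps_to_fls_sum: "fps_to_fls (sum f A) = (\<Sum>x\<in>A. fps_to_fls (f x))"
  by (induction A rule: infinite_finite_induct) simp_all

text \<open>Hensel's lemma applies because \<open>a\<^sub>0(\<lambda>) \<noteq> 0\<close> makes the reduction separable.\<close>
lemma addP_laurent_root_lift:
  fixes a :: "nat \<Rightarrow> 'k::{finite,field} poly"
  assumes a0: "poly (a 0) lam \<noteq> 0" and c: "q_assoc (assoc_at n a lam) c = 0"
  shows "\<exists>y. poly (addP_laurent n a lam) y = 0 \<and> y $$ 0 = c"
proof -
  define C where "C = (\<lambda>i. taylor_fps lam (a i))(n := 1)"
  have "(\<lambda>i. C i $ 0) = (\<lambda>i. emb_const (poly (a i) lam))(n := 1)"
    by (auto simp: C_def taylor_fps_nth_0)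
  moreover have "C 0 $ 0 \<noteq> 0" using a0 by (simp add: C_def taylor_fps_nth_0)
  ultimately obtain x where x: "poly (qpoly TYPE('k) n C) x = 0" "x $ 0 = c"
    using hensel_qpoly[of C, OF _ _, where n = n and c = c] c by (auto simp: q_assoc_assoc_at)
  have "poly (addP_laurent n a lam) (fps_to_fls x) = fps_to_fls (poly (qpoly TYPE('k) n C) x)"
    by (simp add: addP_laurent_def C_def poly_qpoly fps_to_fls_sum fls_times_fps_to_fls fps_to_fls_power
        if_distrib[of fps_to_fls] cong: if_cong)
  thus ?thesis using x by (intro exI[of _ "fps_to_fls x"]) simp
qed

lemma card_roots_addP_laurent_le:
  "card {y. poly (addP_laurent n a (lam :: 'k::{finite,field})) y = 0} \<le> CARD('k) ^ n"
  "finite {y. poly (addP_laurent n a lam) y = 0}"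
proof -
  have nz: "addP_laurent n a lam \<noteq> 0" by (simp add: addP_laurent_def qpoly_nonzero)
  show "card {y. poly (addP_laurent n a lam) y = 0} \<le> CARD('k) ^ n"
    using card_poly_roots_bound[OF nz] by (simp add: addP_laurent_def degree_qpoly)
  show "finite {y. poly (addP_laurent n a lam) y = 0}" by (rule poly_roots_finite[OF nz])
qed

theorem bij_betw_roots_addP_laurent:
  fixes a :: "nat \<Rightarrow> 'k::{finite,field} poly"
  assumes a0: "poly (a 0) lam \<noteq> 0"
  shows "bij_betw (\<lambda>y. y $$ 0) {y. poly (addP_laurent n a lam) y = 0} {x. q_assoc (assoc_at n a lam) x = 0}"
    (is "bij_betw _ ?R ?W")
proof -
  define lift where "lift c = (SOME y. y \<in> ?R \<and> y $$ 0 = c)" for c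
  have lift: "lift c \<in> ?R" "lift c $$ 0 = c" if "c \<in> ?W" for c
  proof -
    have "\<exists>y. y \<in> ?R \<and> y $$ 0 = c" using addP_laurent_root_lift[of a lam n c] a0 that by auto
    from someI_ex[OF this] show "lift c \<in> ?R" "lift c $$ 0 = c" unfolding lift_def by auto
  qed
  have "inj_on lift ?W"
  proof (rule inj_onI)
    fix c c' assume "c \<in> ?W" "c' \<in> ?W" "lift c = lift c'"
    thus "c = c'" using lift(2) by metis
  qed
  hence "card (lift ` ?W) = CARD('k) ^ n"
    using card_q_assoc_roots[OF coeff_0_assoc_at[of a lam n, OF a0]] by (simp add: card_image degree_assoc_at)
  moreover have "lift ` ?W \<subseteq> ?R" using lift(1) by blast
  ultimately have R: "?R = lift ` ?W"
    using card_roots_addP_laurent_le[of n a lam] by (intro card_seteq[symmetric]) simp_all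
  show ?thesis
  proof (rule bij_betw_byWitness[where f' = lift])
    show "\<forall>y\<in>?R. lift (y $$ 0) = y" using R lift(2) by auto
    show "\<forall>c\<in>?W. lift c $$ 0 = c" using lift(2) by blast
    show "(\<lambda>y. y $$ 0) ` ?R \<subseteq> ?W" using R lift(2) by auto
    show "lift ` ?W \<subseteq> ?R" by fact
  qed
qed

lemma map_poly_addP_poly:
  assumes "\<tau> 0 = 0" "\<tau> 1 = 1" "\<And>r. \<tau> (emb_K r) = laurent_at lam r"
  shows "map_poly \<tau> (addP_poly n a) = addP_laurent n a lam"
  unfolding addP_poly_def addP_laurent_def map_poly_qpoly[of \<tau>, OF assms(1)]
  by (rule qpoly_cong) (simp add: assms emb_poly_eq_emb_K laurent_at_poly)

lemma fls_frob_roots_addP_laurent: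
  fixes a :: "nat \<Rightarrow> 'k::{finite,field} poly"
  assumes "poly (addP_laurent n a lam) y = 0"
  shows "poly (addP_laurent n a lam) (fls_frob TYPE('k) y) = 0"
proof -
  have frob: "hom_on UNIV (fls_frob TYPE('k) :: 'k ac fls \<Rightarrow> 'k ac fls)"
    by (rule hom_on_fls_frob) simp
  have "map_poly (fls_frob TYPE('k)) (addP_laurent n a lam) = addP_laurent n a lam"
    unfolding addP_laurent_def map_poly_qpoly[of "fls_frob TYPE('k)", OF hom_onD(1)[OF frob is_subfield_UNIV]]
    by (rule qpoly_cong) (simp add: hom_onD[OF frob] fls_frob_taylor)
  thus ?thesis using hom_on_poly[OF frob is_subfield_UNIV, of "addP_laurent n a lam" y] assms
    by (simp add: hom_onD[OF frob])
qed

section \<open>Embedding the splitting field into the Laurent series\<close>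

lemma is_subfield_range_emb_K: "is_subfield (range (emb_K :: 'k::field ratfun \<Rightarrow> 'k ac))"
  unfolding is_subfield_def
proof (intro conjI ballI)
  show "0 \<in> range emb_K" "1 \<in> range emb_K" using emb_K_simps(1,2) by (metis rangeI)+
  fix x y :: "'k ac" assume "x \<in> range emb_K" "y \<in> range emb_K"
  then obtain r s where rs: "x = emb_K r" "y = emb_K s" by blast
  show "x + y \<in> range emb_K" using rangeI[of emb_K "r + s"] rs by simp
  show "x * y \<in> range emb_K" using rangeI[of emb_K "r * s"] rs by simp
  show "- x \<in> range emb_K" using rangeI[of emb_K "- r"] rs by (simp add: emb_K_def)
  show "inverse x \<in> range emb_K" using rangeI[of emb_K "inverse r"] rs by (simp add: emb_K_def)
qed

lemma algebraic_over_range_emb_K: "\<exists>p. p \<noteq> 0 \<and> poly_over (range emb_K) p \<and> poly p (y :: 'k::field ac) = 0"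
proof -
  obtain p :: "'k ratfun poly" where "p \<noteq> 0" "poly (map_poly to_ac p) y = 0"
    by (rule alg_closure_algebraic)
  thus ?thesis
    by (intro exI[of _ "map_poly to_ac p"]) (auto simp: map_poly_eq_0_iff poly_over_def coeff_map_poly emb_K_def)
qed

lemma is_subfield_split_field: "is_subfield (split_field n a)"
  unfolding split_field_def by (blast intro: is_subfield_Inter)

lemma range_emb_K_subset_split_field: "range emb_K \<subseteq> split_field n a"
  unfolding split_field_def by blast

lemma roots_addP_subset_split_field: "roots_addP n a \<subseteq> split_field n a"
  unfolding split_field_def by blast

lemma split_field_least:
  "is_subfield S \<Longrightarrow> range emb_K \<union> roots_addP n a \<subseteq> S \<Longrightarrow> split_field n a \<subseteq> S"
  unfolding split_field_def by blast

theorem laurent_embedding_exists: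
  fixes a :: "nat \<Rightarrow> 'k::{finite,field} poly"
  assumes a0: "poly (a 0) lam \<noteq> 0"
  shows "\<exists>\<tau>. hom_on (split_field n a) \<tau> \<and> (\<forall>r. \<tau> (emb_K r) = laurent_at lam r)"
proof -
  define h0 where "h0 x = laurent_at lam (of_ac x)" for x
  have h0: "h0 (emb_K r) = laurent_at lam r" for r by (simp add: h0_def emb_K_def)
  have hom: "hom_on (range emb_K) h0"
    using hom_onD[OF hom_on_laurent_at is_subfield_UNIV] by (auto simp: hom_on_def h0 simp flip: emb_K_simps)
  have over: "poly_over (range emb_K) (addP_poly n a)"
    unfolding addP_poly_def using is_subfield_range_emb_K
    by (intro poly_over_qpoly) (auto simp: emb_poly_eq_emb_K intro: range_eqI[of _ _ 1] simp flip: emb_K_simps(2))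
  have "map_poly h0 (addP_poly n a) = addP_laurent n a lam"
    using hom_onD(1,2)[OF hom is_subfield_range_emb_K] by (intro map_poly_addP_poly) (auto simp: h0)
  moreover have "card {y. poly (addP_laurent n a lam) y = 0} = degree (addP_laurent n a lam)"
    using bij_betw_same_card[OF bij_betw_roots_addP_laurent[of a lam n, OF a0]]
      card_q_assoc_roots[OF coeff_0_assoc_at[of a lam n, OF a0]]
    by (simp add: degree_assoc_at addP_laurent_def degree_qpoly)
  ultimately have split: "\<exists>b. poly D b = 0" if "D dvd map_poly h0 (addP_poly n a)" "degree D > 0" for D
    using card_roots_eq_degree_dvd_has_root[of "addP_laurent n a lam" D] that
    by (simp add: addP_laurent_def qpoly_nonzero)
  have roots: "{x. poly (addP_poly n a) x = 0} = roots_addP n a"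
    by (simp add: roots_addP_def addP_eq_poly)
  obtain S \<tau> where S: "is_subfield S" "range emb_K \<union> roots_addP n a \<subseteq> S"
      "S \<subseteq> split_field n a" "hom_on S \<tau>" "\<forall>x\<in>range emb_K. \<tau> x = h0 x"
    using hom_on_extend_roots[OF is_subfield_range_emb_K hom algebraic_over_range_emb_K over
        addP_poly_nonzero split is_subfield_split_field range_emb_K_subset_split_field] roots_addP_subset_split_field
    unfolding roots by blast
  hence "S = split_field n a" using split_field_least by blast
  thus ?thesis using S(4,5) h0 by auto
qed

lemma laurent_embedding_roots:
  fixes a :: "nat \<Rightarrow> 'k::{finite,field} poly"
  assumes a0: "poly (a 0) lam \<noteq> 0"
    and \<tau>: "hom_on (split_field n a) \<tau>" "\<And>r. \<tau> (emb_K r) = laurent_at lam r"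
  shows "\<tau> ` roots_addP n a = {y. poly (addP_laurent n a lam) y = 0}"
proof (rule card_seteq)
  note L = is_subfield_split_field[of n a]
  have map: "map_poly \<tau> (addP_poly n a) = addP_laurent n a lam"
    using hom_onD(1,2)[OF \<tau>(1) L] \<tau>(2) by (rule map_poly_addP_poly)
  have "emb_poly (a i) \<in> split_field n a" for i
    using range_emb_K_subset_split_field[of n a] by (auto simp: emb_poly_eq_emb_K)
  hence over: "poly_over (split_field n a) (addP_poly n a)"
    unfolding addP_poly_def by (intro poly_over_qpoly[OF L]) (simp add: subfieldD(2)[OF L])
  show "\<tau> ` roots_addP n a \<subseteq> {y. poly (addP_laurent n a lam) y = 0}"
  proof
    fix y assume "y \<in> \<tau> ` roots_addP n a"
    then obtain v where v: "v \<in> roots_addP n a" "y = \<tau> v" by blast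
    hence "\<tau> (poly (addP_poly n a) v) = 0"
      using hom_onD(1)[OF \<tau>(1) L] by (simp add: roots_addP_def addP_eq_poly)
    moreover have "v \<in> split_field n a" using v(1) roots_addP_subset_split_field by blast
    ultimately show "y \<in> {y. poly (addP_laurent n a lam) y = 0}"
      using hom_on_poly[OF \<tau>(1) L over] map v(2) by simp
  qed
  show "finite {y. poly (addP_laurent n a lam) y = 0}" by (rule card_roots_addP_laurent_le(2))
  have "a 0 \<noteq> 0" using a0 by auto
  hence "card (\<tau> ` roots_addP n a) = CARD('k) ^ n"
    using inj_on_subset[OF inj_on_hom_on[OF \<tau>(1) L] roots_addP_subset_split_field]
    by (simp add: card_image card_roots_addP)
  thus "card {y. poly (addP_laurent n a lam) y = 0} \<le> card (\<tau> ` roots_addP n a)"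
    using card_roots_addP_laurent_le(1) by simp
qed

lemma laurent_reduction:
  fixes a :: "nat \<Rightarrow> 'k::{finite,field} poly"
  assumes a0: "poly (a 0) lam \<noteq> 0"
    and \<tau>: "hom_on (split_field n a) \<tau>" "\<And>r. \<tau> (emb_K r) = laurent_at lam r"
  shows "bij_betw (\<lambda>v. \<tau> v $$ 0) (roots_addP n a) {x. q_assoc (assoc_at n a lam) x = 0}"
    and "x \<in> roots_addP n a \<Longrightarrow> y \<in> roots_addP n a \<Longrightarrow> \<tau> (x + y) $$ 0 = \<tau> x $$ 0 + \<tau> y $$ 0"
    and "x \<in> roots_addP n a \<Longrightarrow> \<tau> (emb_const c * x) $$ 0 = emb_const c * \<tau> x $$ 0"
proof -
  note L = is_subfield_split_field[of n a] and VL = roots_addP_subset_split_field[of n a]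
  have "inj_on \<tau> (roots_addP n a)" by (rule inj_on_subset[OF inj_on_hom_on[OF \<tau>(1) L] VL])
  hence "bij_betw \<tau> (roots_addP n a) {y. poly (addP_laurent n a lam) y = 0}"
    using laurent_embedding_roots[OF a0 \<tau>] by (simp add: bij_betw_def)
  from bij_betw_trans[OF this bij_betw_roots_addP_laurent[of a lam n, OF a0]]
  show "bij_betw (\<lambda>v. \<tau> v $$ 0) (roots_addP n a) {x. q_assoc (assoc_at n a lam) x = 0}"
    by (simp add: comp_def)
  show "\<tau> (x + y) $$ 0 = \<tau> x $$ 0 + \<tau> y $$ 0" if "x \<in> roots_addP n a" "y \<in> roots_addP n a"
  proof -
    have "x \<in> split_field n a" "y \<in> split_field n a" using VL that by auto
    thus ?thesis by (simp add: hom_onD(3)[OF \<tau>(1) L])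
  qed
  show "\<tau> (emb_const c * x) $$ 0 = emb_const c * \<tau> x $$ 0" if "x \<in> roots_addP n a"
  proof -
    have "emb_const c \<in> split_field n a" "x \<in> split_field n a"
      using range_emb_K_subset_split_field[of n a] VL that by (auto simp: emb_const_eq_emb_K)
    moreover have "\<tau> (emb_const c) = fls_const (emb_const c)"
      by (simp add: emb_const_eq_emb_K \<tau>(2) laurent_at_poly taylor_fps_const)
    ultimately show ?thesis by (simp add: hom_onD(4)[OF \<tau>(1) L])
  qed
qed

section \<open>The Frobenius element\<close>

text \<open>The preimage of \<open>\<tau> ` L\<close> under \<open>\<phi> \<circ> \<tau>\<close> is a subfield containing F_q(t) and the roots.\<close>
lemma split_field_image_stable:
  assumes \<tau>: "hom_on (split_field n a) \<tau>" and \<phi>: "hom_on UNIV \<phi>"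
    and \<phi>K: "\<And>r. \<phi> (\<tau> (emb_K r)) = \<tau> (emb_K r)"
    and \<phi>V: "\<And>v. v \<in> roots_addP n a \<Longrightarrow> \<phi> (\<tau> v) \<in> \<tau> ` roots_addP n a"
    and x: "x \<in> split_field n a"
  shows "\<phi> (\<tau> x) \<in> \<tau> ` split_field n a"
proof -
  define L where "L = split_field n a"
  have L: "is_subfield L" unfolding L_def by (rule is_subfield_split_field)
  have "is_subfield {x \<in> L. (\<phi> \<circ> \<tau>) x \<in> \<tau> ` L}"
    using is_subfield_image[OF L \<tau>[folded L_def]] hom_on_comp[OF \<tau>[folded L_def] \<phi>]
    by (intro is_subfield_preimage[OF L])
  moreover have "range emb_K \<subseteq> {x \<in> L. (\<phi> \<circ> \<tau>) x \<in> \<tau> ` L}"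
    using range_emb_K_subset_split_field[of n a] \<phi>K by (auto simp: L_def simp del: emb_K_simps)
  moreover have "roots_addP n a \<subseteq> {x \<in> L. (\<phi> \<circ> \<tau>) x \<in> \<tau> ` L}"
    using roots_addP_subset_split_field[of n a] \<phi>V unfolding L_def by fastforce
  ultimately have "L \<subseteq> {x \<in> L. (\<phi> \<circ> \<tau>) x \<in> \<tau> ` L}"
    unfolding L_def by (intro split_field_least) auto
  thus ?thesis using x by (auto simp: L_def)
qed

lemma split_field_endo_surj:
  assumes \<sigma>: "hom_on (split_field n a) \<sigma>" "inj_on \<sigma> (split_field n a)"
    "\<sigma> ` split_field n a \<subseteq> split_field n a"
    and \<sigma>K: "\<And>r. \<sigma> (emb_K r) = emb_K r" and \<sigma>V: "\<sigma> ` roots_addP n a \<subseteq> roots_addP n a"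
  shows "\<sigma> ` roots_addP n a = roots_addP n a" and "\<sigma> ` split_field n a = split_field n a"
proof -
  show V: "\<sigma> ` roots_addP n a = roots_addP n a"
    using inj_on_subset[OF \<sigma>(2) roots_addP_subset_split_field] \<sigma>V
    by (intro endo_inj_surj[OF roots_addP_finite])
  have "range emb_K \<subseteq> \<sigma> ` split_field n a"
    using \<sigma>K range_emb_K_subset_split_field[of n a] by (metis image_subsetI rev_image_eqI subsetD rangeI)
  moreover have "roots_addP n a \<subseteq> \<sigma> ` split_field n a"
    using V roots_addP_subset_split_field[of n a] by (metis image_mono)
  ultimately have "split_field n a \<subseteq> \<sigma> ` split_field n a"
    by (intro split_field_least is_subfield_image[OF is_subfield_split_field \<sigma>(1)]) simp
  thus "\<sigma> ` split_field n a = split_field n a" using \<sigma>(3) by blast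
qed

theorem galois_group_conjugate:
  fixes \<tau> :: "'k::{finite,field} ac \<Rightarrow> 'b::field"
  assumes \<tau>: "hom_on (split_field n a) \<tau>" and \<phi>: "hom_on UNIV \<phi>"
    and \<phi>K: "\<And>r. \<phi> (\<tau> (emb_K r)) = \<tau> (emb_K r)"
    and \<phi>V: "\<And>v. v \<in> roots_addP n a \<Longrightarrow> \<phi> (\<tau> v) \<in> \<tau> ` roots_addP n a"
  shows "\<exists>\<sigma>\<in>galois_group n a. (\<forall>x\<in>split_field n a. \<tau> (\<sigma> x) = \<phi> (\<tau> x))
           \<and> \<sigma> ` roots_addP n a = roots_addP n a"
proof -
  note L = is_subfield_split_field[of n a]
  obtain \<sigma> where \<sigma>L: "\<forall>x\<in>split_field n a. \<sigma> x \<in> split_field n a \<and> \<tau> (\<sigma> x) = \<phi> (\<tau> x)"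
    and \<sigma>: "inj_on \<sigma> (split_field n a)" "hom_on (split_field n a) \<sigma>"
    using hom_on_conjugate[OF L \<tau> \<phi> split_field_image_stable[OF \<tau> \<phi> \<phi>K \<phi>V]] by blast
  have \<sigma>eqI: "\<sigma> x = y" if "x \<in> split_field n a" "y \<in> split_field n a" "\<tau> y = \<phi> (\<tau> x)" for x y
    using inj_onD[OF inj_on_hom_on[OF \<tau> L], of "\<sigma> x" y] \<sigma>L that by simp
  have KL: "emb_K r \<in> split_field n a" for r using range_emb_K_subset_split_field by blast
  have \<sigma>K: "\<sigma> (emb_K r) = emb_K r" for r by (rule \<sigma>eqI) (simp_all add: KL \<phi>K)
  have "\<sigma> v \<in> roots_addP n a" if v: "v \<in> roots_addP n a" for v
  proof -
    obtain w where w: "w \<in> roots_addP n a" "\<phi> (\<tau> v) = \<tau> w" using \<phi>V[OF v] by blast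
    have "\<sigma> v = w" using v w roots_addP_subset_split_field by (intro \<sigma>eqI) auto
    thus ?thesis using w(1) by simp
  qed
  hence "\<sigma> ` roots_addP n a = roots_addP n a" "\<sigma> ` split_field n a = split_field n a"
    using split_field_endo_surj[OF \<sigma>(2,1) _ \<sigma>K] \<sigma>L by blast+
  moreover have "\<sigma> \<in> galois_group n a"
    using \<sigma> \<sigma>K calculation(2) by (simp add: galois_group_def bij_betw_def hom_on_def)
  ultimately show ?thesis using \<sigma>L by blast
qed

lemma frobenius_in_galois_group:
  fixes a :: "nat \<Rightarrow> 'k::{finite,field} poly"
  assumes a0: "poly (a 0) lam \<noteq> 0"
    and \<tau>: "hom_on (split_field n a) \<tau>" "\<And>r. \<tau> (emb_K r) = laurent_at lam r"
  shows "\<exists>\<sigma>\<in>galois_group n a. (\<forall>x\<in>split_field n a. \<tau> (\<sigma> x) = fls_frob TYPE('k) (\<tau> x))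
           \<and> \<sigma> ` roots_addP n a = roots_addP n a"
proof (rule galois_group_conjugate[OF \<tau>(1)])
  show "hom_on UNIV (fls_frob TYPE('k) :: 'k ac fls \<Rightarrow> _)" by (rule hom_on_fls_frob) simp
  show "fls_frob TYPE('k) (\<tau> (emb_K r)) = \<tau> (emb_K r)" for r
    by (simp add: \<tau>(2) fls_frob_laurent_at)
  show "fls_frob TYPE('k) (\<tau> v) \<in> \<tau> ` roots_addP n a" if "v \<in> roots_addP n a" for v
    using fls_frob_roots_addP_laurent[of n a lam "\<tau> v"] laurent_embedding_roots[OF a0 \<tau>] that by blast
qed

locale frobenius_conjugacy =
  fixes V :: "'k::{finite,field} ac set" and \<sigma> \<rho> :: "'k ac \<Rightarrow> 'k ac"
  assumes zero_mem: "0 \<in> V"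
    and add_mem: "\<And>x y. x \<in> V \<Longrightarrow> y \<in> V \<Longrightarrow> x + y \<in> V"
    and scale_mem: "\<And>c x. x \<in> V \<Longrightarrow> emb_const c * x \<in> V"
    and \<sigma>_mem: "\<And>v. v \<in> V \<Longrightarrow> \<sigma> v \<in> V"
    and \<rho>_add: "\<And>x y. x \<in> V \<Longrightarrow> y \<in> V \<Longrightarrow> \<rho> (x + y) = \<rho> x + \<rho> y"
    and \<rho>_scale: "\<And>c x. x \<in> V \<Longrightarrow> \<rho> (emb_const c * x) = emb_const c * \<rho> x"
    and \<rho>_\<sigma>: "\<And>v. v \<in> V \<Longrightarrow> \<rho> (\<sigma> v) = \<rho> v ^ CARD('k)"
begin

lemma \<rho>_zero: "\<rho> 0 = 0"
  using \<rho>_add[OF zero_mem zero_mem] by (metis add_0_right add_cancel_left_right)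

lemma sum_mem: "(\<And>i. i \<in> I \<Longrightarrow> f i \<in> V) \<Longrightarrow> sum f I \<in> V \<and> \<rho> (sum f I) = (\<Sum>i\<in>I. \<rho> (f i))"
  by (induction I rule: infinite_finite_induct) (simp_all add: zero_mem add_mem \<rho>_zero \<rho>_add)

lemma iterate_mem: "v \<in> V \<Longrightarrow> (\<sigma> ^^ i) v \<in> V \<and> \<rho> ((\<sigma> ^^ i) v) = \<rho> v ^ (CARD('k) ^ i)"
  by (induction i) (simp_all add: \<sigma>_mem \<rho>_\<sigma> power_mult[symmetric] mult.commute)

lemma scaled_iterate_mem:
  "v \<in> V \<Longrightarrow> emb_const c * (\<sigma> ^^ i) v \<in> V \<and> \<rho> (emb_const c * (\<sigma> ^^ i) v) = emb_const c * \<rho> v ^ (CARD('k) ^ i)"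
  using iterate_mem[of v i] scale_mem \<rho>_scale by auto

lemma poly_op_mem: "w \<in> V \<Longrightarrow> poly_op g \<sigma> w \<in> V \<and> \<rho> (poly_op g \<sigma> w) = q_assoc g (\<rho> w)"
  using sum_mem[of "{..degree g}" "\<lambda>i. emb_const (coeff g i) * (\<sigma> ^^ i) w"] scaled_iterate_mem[of w]
  by (simp add: poly_op_def q_assoc_eq_sum[of g "degree g"])

theorem cyclic_min_poly:
  assumes \<rho>: "bij_betw \<rho> V {x. q_assoc m x = 0}" and m: "lead_coeff m = 1" "coeff m 0 \<noteq> 0"
  shows "cyclic_on TYPE('k) V \<sigma> \<and> is_min_poly_on V \<sigma> m"
proof -
  have \<rho>inj: "\<rho> x = \<rho> y \<Longrightarrow> x \<in> V \<Longrightarrow> y \<in> V \<Longrightarrow> x = y" for x y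
    using \<rho> by (auto simp: bij_betw_def dest: inj_onD)
  obtain v0 where v0: "generates_annihilator m v0"
    using cyclic_vector_exists[OF m(2)] by blast
  have "v0 \<in> \<rho> ` V" using v0 \<rho> by (simp add: bij_betw_def generates_annihilator_def)
  then obtain v where v: "v \<in> V" "\<rho> v = v0" by blast
  have "cyclic_on TYPE('k) V \<sigma>"
    unfolding cyclic_on_def
  proof (intro bexI[OF _ v(1)] ballI)
    fix w assume w: "w \<in> V"
    have "\<rho> w \<in> {x. q_assoc m x = 0}" using \<rho> w by (auto simp: bij_betw_def)
    moreover have "m \<noteq> 0" using m(1) by auto
    ultimately obtain c where c: "\<rho> w = (\<Sum>i<degree m. emb_const (c i) * v0 ^ (CARD('k) ^ i))"
      using roots_q_assoc_span[OF v0] by blast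
    define w' where "w' = (\<Sum>i<degree m. emb_const (c i) * (\<sigma> ^^ i) v)"
    have "w' \<in> V" "\<rho> w' = \<rho> w"
      using sum_mem[of "{..<degree m}" "\<lambda>i. emb_const (c i) * (\<sigma> ^^ i) v"] scaled_iterate_mem[OF v(1)]
      by (simp_all add: w'_def c v(2))
    hence "w = w'" using \<rho>inj w by metis
    thus "\<exists>N c. w = (\<Sum>i<N. emb_const (c i) * (\<sigma> ^^ i) v)" unfolding w'_def by blast
  qed
  moreover have "is_min_poly_on V \<sigma> m"
    unfolding is_min_poly_on_def
  proof (intro conjI allI ballI impI)
    show "lead_coeff m = 1" by (fact m(1))
    fix w assume w: "w \<in> V"
    have "q_assoc m (\<rho> w) = 0" using \<rho> w by (auto simp: bij_betw_def)
    thus "poly_op m \<sigma> w = 0" using poly_op_mem[OF w] \<rho>inj[of _ 0] zero_mem \<rho>_zero by metis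
  next
    fix p assume p: "p \<noteq> 0 \<and> (\<forall>w\<in>V. poly_op p \<sigma> w = 0)"
    hence "poly_op p \<sigma> v = 0" using v(1) by blast
    hence "q_assoc p v0 = 0" using poly_op_mem[OF v(1), of p] v(2) \<rho>_zero by simp
    hence "m dvd p" using v0 by (simp add: generates_annihilator_def)
    thus "degree m \<le> degree p" using p by (simp add: dvd_imp_degree_le)
  qed
  ultimately show ?thesis ..
qed

end

theorem corollary2p5:
  fixes n :: nat and a :: "nat \<Rightarrow> 'k::{finite,field} poly" and lam :: 'k
  assumes "poly (a 0) lam \<noteq> 0"
  shows "\<exists>\<sigma>\<in>galois_group n a.
           cyclic_on TYPE('k) (roots_addP n a) \<sigma>
         \<and> is_min_poly_on (roots_addP n a) \<sigma>
             (monom 1 n + (\<Sum>i<n. monom (poly (a i) lam) i))"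
proof -
  let ?V = "roots_addP n a"
  obtain \<tau> where \<tau>: "hom_on (split_field n a) \<tau>" "\<And>r. \<tau> (emb_K r) = laurent_at lam r"
    using laurent_embedding_exists[of a lam n, OF assms] by blast
  obtain \<sigma> where \<sigma>: "\<sigma> \<in> galois_group n a" "\<forall>x\<in>split_field n a. \<tau> (\<sigma> x) = fls_frob TYPE('k) (\<tau> x)"
    "\<sigma> ` ?V = ?V"
    using frobenius_in_galois_group[OF assms \<tau>] by blast
  note \<rho> = laurent_reduction[OF assms \<tau>]
  interpret frobenius_conjugacy ?V \<sigma> "\<lambda>v. \<tau> v $$ 0"
  proof
    show "0 \<in> ?V" by (simp add: roots_addP_def addP_def)
    show "\<sigma> v \<in> ?V" if "v \<in> ?V" for v using \<sigma>(3) that by blast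
    show "\<tau> (\<sigma> v) $$ 0 = (\<tau> v $$ 0) ^ CARD('k)" if "v \<in> ?V" for v
    proof -
      have "v \<in> split_field n a" using roots_addP_subset_split_field that by blast
      thus ?thesis using \<sigma>(2) by (simp add: fls_frob_nth)
    qed
  qed (simp_all add: roots_addP_add roots_addP_scale \<rho>(2,3))
  have "cyclic_on TYPE('k) ?V \<sigma> \<and> is_min_poly_on ?V \<sigma> (assoc_at n a lam)"
    using assms by (intro cyclic_min_poly \<rho>(1) lead_coeff_assoc_at coeff_0_assoc_at)
  thus ?thesis using \<sigma>(1) unfolding assoc_at_def by blast
qed

end
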